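(* For every discrete group $G$ and every normalized 2-cocycle $\sigma$ on $G$, $M_0A(G,\sigma)=M_0A(G)$, and for $\varphi$ in this set the cb-norm $\|M_\varphi\|_{cb}$ computed on $C^*_r(G,\sigma)$ does not depend on $\sigma$. More precisely, for $\varphi:G\to\mathbb{C}$, one has $\varphi\in M_0A(G,\sigma)$ if and only if the kernel $K_\varphi(s,t)=\varphi(st^{-1})$ is a Schur multiplier on $B(\ell^2(G))$, and then $\|M_\varphi\|_{cb}=\|S_{K_\varphi}\|$.
   Context: $\sigma:G\times G\to\mathbb{T}$ is a normalized 2-cocycle ($\sigma(g,h)\sigma(gh,k)=\sigma(h,k)\sigma(g,hk)$, $\sigma(g,e)=\sigma(e,g)=1$); $\Lambda_\sigma(g)$ is the unitary on $\ell^2(G)$ with $(\Lambda_\sigma(g)\xi)(h)=\sigma(g,g^{-1}h)\xi(g^{-1}h)$; $C^*_r(G,\sigma)$ is the operator-norm closure of $\mathbb{C}(G,\sigma)=\mathrm{span}\,\Lambda_\sigma(G)$. For $\varphi:G\to\mathbb{C}$, $M_\varphi:\mathbb{C}(G,\sigma)\to\mathbb{C}(G,\sigma)$ is the linear map with $M_\varphi(\Lambda_\sigma(g))=\varphi(g)\Lambda_\sigma(g)$; $\varphi\in MA(G,\sigma)$ (a $\sigma$-multiplier) if $M_\varphi$ is bounded in operator norm, in which case $M_\varphi$ also denotes its extension to $C^*_r(G,\sigma)$. $M_0A(G,\sigma)$ is the set of $\varphi\in MA(G,\sigma)$ with $M_\varphi$ completely bounded, with norm $\|\varphi\|_{cb}=\|M_\varphi\|_{cb}$;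 $M_0A(G)=M_0A(G,1)$. A kernel $K:G\times G\to\mathbb{C}$ is a Schur multiplier if for every $A\in B(\ell^2(G))$ with matrix $[A(s,t)]$ in the canonical basis, $[K(s,t)A(s,t)]$ is the matrix of a bounded operator $S_K(A)$; $S_K$ is then a bounded map on $B(\ell^2(G))$. *)

theory Defs
  imports "HOL-Analysis.Analysis"
begin

text \<open>Discrete group: a type of class group_add (the group law is written +,
  not assumed commutative; the inverse of t is - t, so s t^-1 is s + - t).
  Bounded operators on l2(I) are represented by their matrices in the
  canonical basis; a matrix is (the matrix of) a bounded operator iff its
  sesquilinear form on finitely supported vectors is bounded, and the
  operator norm is the supremum of that form over unit vectors.\<close>

definition supp :: "('i \<Rightarrow> complex) \<Rightarrow> 'i set" where
  "supp x = {i. x i \<noteq> 0}"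

definition fin_vec :: "('i \<Rightarrow> complex) \<Rightarrow> bool" where
  "fin_vec x \<longleftrightarrow> finite (supp x)"

definition l2norm :: "('i \<Rightarrow> complex) \<Rightarrow> real" where
  "l2norm x = sqrt (\<Sum>i\<in>supp x. (cmod (x i))\<^sup>2)"

definition mat_form :: "('i \<Rightarrow> 'i \<Rightarrow> complex) \<Rightarrow> ('i \<Rightarrow> complex) \<Rightarrow> ('i \<Rightarrow> complex) \<Rightarrow> complex" where
  "mat_form A \<xi> \<eta> = (\<Sum>s\<in>supp \<eta>. \<Sum>t\<in>supp \<xi>. cnj (\<eta> s) * A s t * \<xi> t)"

definition mat_bounded :: "('i \<Rightarrow> 'i \<Rightarrow> complex) \<Rightarrow> bool" where
  "mat_bounded A \<longleftrightarrow> (\<exists>C. \<forall>\<xi> \<eta>. fin_vec \<xi> \<longrightarrow> fin_vec \<eta> \<longrightarrow>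
      cmod (mat_form A \<xi> \<eta>) \<le> C * l2norm \<xi> * l2norm \<eta>)"

definition mat_norm :: "('i \<Rightarrow> 'i \<Rightarrow> complex) \<Rightarrow> real" where
  "mat_norm A = Sup {cmod (mat_form A \<xi> \<eta>) | \<xi> \<eta>.
      fin_vec \<xi> \<and> fin_vec \<eta> \<and> l2norm \<xi> \<le> 1 \<and> l2norm \<eta> \<le> 1}"

definition cocycle2 :: "('g::group_add \<Rightarrow> 'g \<Rightarrow> complex) \<Rightarrow> bool" where
  "cocycle2 \<sigma> \<longleftrightarrow> (\<forall>g h. cmod (\<sigma> g h) = 1)
     \<and> (\<forall>g h k. \<sigma> g h * \<sigma> (g + h) k = \<sigma> h k * \<sigma> g (h + k))
     \<and> (\<forall>g. \<sigma> g 0 = 1 \<and> \<sigma> 0 g = 1)"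

text \<open>Matrix of the element sum_g c(g) Lambda_sigma(g) of C(G,sigma)
  (c finitely supported): the (h,k) entry of Lambda_sigma(g) is
  sigma(g, g^-1 h) if k = g^-1 h and 0 otherwise.\<close>
definition tw_mat :: "('g::group_add \<Rightarrow> 'g \<Rightarrow> complex) \<Rightarrow> ('g \<Rightarrow> complex) \<Rightarrow> 'g \<Rightarrow> 'g \<Rightarrow> complex" where
  "tw_mat \<sigma> c = (\<lambda>h k. c (h + - k) * \<sigma> (h + - k) k)"

text \<open>An n x n matrix [x_ij] over C(G,sigma), viewed as an operator on
  l2(G)^n = l2({0..<n} x G) (indices i >= n carry zero entries).\<close>
definition block_mat :: "('g::group_add \<Rightarrow> 'g \<Rightarrow> complex) \<Rightarrow> nat \<Rightarrow> (nat \<Rightarrow> nat \<Rightarrow> 'g \<Rightarrow> complex)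
    \<Rightarrow> (nat \<times> 'g) \<Rightarrow> (nat \<times> 'g) \<Rightarrow> complex" where
  "block_mat \<sigma> n C = (\<lambda>(i, h) (j, k). if i < n \<and> j < n then tw_mat \<sigma> (C i j) h k else 0)"

definition MA :: "('g::group_add \<Rightarrow> 'g \<Rightarrow> complex) \<Rightarrow> ('g \<Rightarrow> complex) set" where
  "MA \<sigma> = {\<phi>. \<exists>K. \<forall>c. fin_vec c \<longrightarrow>
      mat_norm (tw_mat \<sigma> (\<lambda>g. \<phi> g * c g)) \<le> K * mat_norm (tw_mat \<sigma> c)}"

text \<open>K bounds all amplifications id_n \<otimes> M_phi on M_n(C(G,sigma)).\<close>
definition cb_bound :: "('g::group_add \<Rightarrow> 'g \<Rightarrow> complex) \<Rightarrow> ('g \<Rightarrow> complex) \<Rightarrow> real \<Rightarrow> bool" where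
  "cb_bound \<sigma> \<phi> K \<longleftrightarrow> 0 \<le> K \<and> (\<forall>n C. (\<forall>i j. fin_vec (C i j)) \<longrightarrow>
      mat_norm (block_mat \<sigma> n (\<lambda>i j g. \<phi> g * C i j g)) \<le> K * mat_norm (block_mat \<sigma> n C))"

definition M0A :: "('g::group_add \<Rightarrow> 'g \<Rightarrow> complex) \<Rightarrow> ('g \<Rightarrow> complex) set" where
  "M0A \<sigma> = {\<phi>. \<phi> \<in> MA \<sigma> \<and> (\<exists>K. cb_bound \<sigma> \<phi> K)}"

text \<open>cb-norm of M_phi (equal on C(G,sigma) and on its closure C*_r(G,sigma)).\<close>
definition cb_norm :: "('g::group_add \<Rightarrow> 'g \<Rightarrow> complex) \<Rightarrow> ('g \<Rightarrow> complex) \<Rightarrow> real" where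
  "cb_norm \<sigma> \<phi> = Inf {K. cb_bound \<sigma> \<phi> K}"

definition schur_mult :: "('i \<Rightarrow> 'i \<Rightarrow> complex) \<Rightarrow> bool" where
  "schur_mult K \<longleftrightarrow> (\<forall>A. mat_bounded A \<longrightarrow> mat_bounded (\<lambda>s t. K s t * A s t))"

definition schur_norm :: "('i \<Rightarrow> 'i \<Rightarrow> complex) \<Rightarrow> real" where
  "schur_norm K = Inf {C. 0 \<le> C \<and> (\<forall>A. mat_bounded A \<longrightarrow>
      mat_norm (\<lambda>s t. K s t * A s t) \<le> C * mat_norm A)}"

end

(*
  Write K(s,t) = phi(s - t). The matrix of an element of C(G,sigma) depends, up to the
  cocycle, only on s - t, so M_phi acts on it, and entrywise on M_n(C(G,sigma)), as the Schur
  product with K in the G-variables.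

  Schur multipliers are automatically completely bounded with the same norm: a finitely
  supported vector on J x G factors through its fibrewise l2-norms, which turns the amplified
  Schur product into an ordinary one. Conversely, a bounded matrix A cut down to a finite set
  {f 0, ..., f (n - 1)} is realised by an n x n matrix over C(G,sigma) whose matrix on
  l2({0..<n} x G) is a direct sum of copies of A conjugated by diagonal unitaries; so a cb bound
  for M_phi bounds the Schur product with K. Neither side depends on sigma.

  Finally, if the Schur product with K maps bounded matrices to bounded ones, it does so with a
  uniform constant: otherwise finite witnesses of growing norm can be translated apart (G being
  infinite) and glued into a single contraction on which it is unbounded.
*)

theory Submission
  imports Defs
begin

lemma sum_mult_le_sqrt_sum_squares:
  fixes a b :: "'a \<Rightarrow> real"
  shows "(\<Sum>i\<in>I. a i * b i) \<le> sqrt (\<Sum>i\<in>I. (a i)\<^sup>2) * sqrt (\<Sum>i\<in>I. (b i)\<^sup>2)"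
proof -
  have "(\<Sum>i\<in>I. a i * b i) \<le> sqrt ((\<Sum>i\<in>I. a i * b i)\<^sup>2)" by simp
  also have "\<dots> \<le> sqrt ((\<Sum>i\<in>I. (a i)\<^sup>2) * (\<Sum>i\<in>I. (b i)\<^sup>2))"
    by (rule real_sqrt_le_mono[OF Cauchy_Schwarz_ineq_sum])
  finally show ?thesis by (simp add: real_sqrt_mult)
qed

lemma sum_le_sum_if_nonzero_in:
  fixes f :: "'a \<Rightarrow> real"
  assumes "finite A" "finite B" "\<And>x. 0 \<le> f x" "\<And>x. x \<in> A \<Longrightarrow> f x \<noteq> 0 \<Longrightarrow> x \<in> B"
  shows "sum f A \<le> sum f B"
proof -
  have "sum f A = sum f (A \<inter> B)"
    by (rule sum.mono_neutral_right) (use assms in auto)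
  also have "\<dots> \<le> sum f B"
    by (rule sum_mono2) (use assms in auto)
  finally show ?thesis .
qed

lemma sum_le_sum_lessThan_times:
  fixes F :: "nat \<times> 'a \<Rightarrow> real"
  assumes "finite T" "\<And>q. 0 \<le> F q" "\<And>q. q \<in> T \<Longrightarrow> F q \<noteq> 0 \<Longrightarrow> fst q < n"
  shows "(\<Sum>q\<in>T. F q) \<le> (\<Sum>j<n. \<Sum>k\<in>snd ` T. F (j, k))"
proof -
  have "(\<Sum>q\<in>T. F q) \<le> (\<Sum>q\<in>{..<n} \<times> snd ` T. F q)"
    by (rule sum_le_sum_if_nonzero_in) (use assms in \<open>force+\<close>)
  then show ?thesis by (simp add: sum.cartesian_product')
qed

lemma sum_pairs_swap:
  "(\<Sum>p\<in>I \<times> S. \<Sum>q\<in>J \<times> T. F (fst p) (snd p) (fst q) (snd q)) =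
   (\<Sum>s\<in>S. \<Sum>t\<in>T. \<Sum>i\<in>I. \<Sum>j\<in>J. F i s j t)"
proof -
  have "(\<Sum>p\<in>I \<times> S. \<Sum>q\<in>J \<times> T. F (fst p) (snd p) (fst q) (snd q)) =
      (\<Sum>i\<in>I. \<Sum>s\<in>S. \<Sum>j\<in>J. \<Sum>t\<in>T. F i s j t)"
    by (simp add: sum.cartesian_product')
  also have "\<dots> = (\<Sum>s\<in>S. \<Sum>t\<in>T. \<Sum>i\<in>I. \<Sum>j\<in>J. F i s j t)"
  proof (subst sum.swap, intro sum.cong refl)
    fix s
    have "(\<Sum>i\<in>I. \<Sum>j\<in>J. \<Sum>t\<in>T. F i s j t) = (\<Sum>i\<in>I. \<Sum>t\<in>T. \<Sum>j\<in>J. F i s j t)"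
      by (intro sum.cong refl sum.swap)
    also have "\<dots> = (\<Sum>t\<in>T. \<Sum>i\<in>I. \<Sum>j\<in>J. F i s j t)"
      by (rule sum.swap)
    finally show "(\<Sum>i\<in>I. \<Sum>j\<in>J. \<Sum>t\<in>T. F i s j t) = (\<Sum>t\<in>T. \<Sum>i\<in>I. \<Sum>j\<in>J. F i s j t)" .
  qed
  finally show ?thesis .
qed

definition sqnorm :: "('i \<Rightarrow> complex) \<Rightarrow> real" where
  "sqnorm x = (\<Sum>i\<in>supp x. (cmod (x i))\<^sup>2)"

definition vec_restr :: "('i \<Rightarrow> complex) \<Rightarrow> 'i set \<Rightarrow> 'i \<Rightarrow> complex" where
  "vec_restr x T = (\<lambda>t. if t \<in> T then x t else 0)"

lemma sqnorm_nonneg: "0 \<le> sqnorm x"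
  by (simp add: sqnorm_def sum_nonneg)

lemma l2norm_eq_sqrt_sqnorm: "l2norm x = sqrt (sqnorm x)"
  by (simp add: l2norm_def sqnorm_def)

lemma l2norm_nonneg: "0 \<le> l2norm x"
  by (simp add: l2norm_eq_sqrt_sqnorm sqnorm_nonneg)

lemma l2norm_power2: "(l2norm x)\<^sup>2 = sqnorm x"
  by (simp add: l2norm_eq_sqrt_sqnorm sqnorm_nonneg)

lemma fin_vec_if_supp_subset: "finite S \<Longrightarrow> supp x \<subseteq> S \<Longrightarrow> fin_vec x"
  unfolding fin_vec_def by (rule finite_subset)

lemma sqnorm_eq_sum_superset:
  assumes "finite S" "supp x \<subseteq> S"
  shows "sqnorm x = (\<Sum>i\<in>S. (cmod (x i))\<^sup>2)"
  unfolding sqnorm_def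
  by (rule sum.mono_neutral_left) (use assms in \<open>auto simp: supp_def\<close>)

lemma supp_eq_empty_if_l2norm_eq_0:
  assumes "fin_vec x" "l2norm x = 0"
  shows "supp x = {}"
proof -
  have "sqnorm x = 0" using assms(2) l2norm_power2[of x] by simp
  then have "\<forall>i\<in>supp x. (cmod (x i))\<^sup>2 = 0"
    using assms(1) unfolding sqnorm_def fin_vec_def by (subst (asm) sum_nonneg_eq_0_iff) auto
  then show ?thesis by (auto simp: supp_def)
qed

lemma norm_le_l2norm:
  assumes "fin_vec x"
  shows "cmod (x t) \<le> l2norm x"
proof (cases "t \<in> supp x")
  case True
  have "(cmod (x t))\<^sup>2 \<le> sqnorm x"
    unfolding sqnorm_def by (rule member_le_sum[OF True]) (use assms in \<open>auto simp: fin_vec_def\<close>)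
  then show ?thesis by (simp add: l2norm_eq_sqrt_sqnorm real_le_rsqrt)
qed (simp add: supp_def l2norm_nonneg)

lemma supp_scale_subset: "supp (\<lambda>i. c * x i) \<subseteq> supp x"
  by (auto simp: supp_def)

lemma fin_vec_scale: "fin_vec x \<Longrightarrow> fin_vec (\<lambda>i. c * x i)"
  unfolding fin_vec_def using supp_scale_subset[of c x] finite_subset by blast

lemma l2norm_scale:
  assumes "fin_vec x"
  shows "l2norm (\<lambda>i. c * x i) = cmod c * l2norm x"
proof -
  have "sqnorm (\<lambda>i. c * x i) = (\<Sum>i\<in>supp x. (cmod (c * x i))\<^sup>2)"
    by (rule sqnorm_eq_sum_superset) (use assms supp_scale_subset[of c x] in \<open>auto simp: fin_vec_def\<close>)
  also have "\<dots> = (cmod c)\<^sup>2 * sqnorm x"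
    by (simp add: sqnorm_def sum_distrib_left norm_mult power_mult_distrib)
  finally show ?thesis by (simp add: l2norm_eq_sqrt_sqnorm real_sqrt_mult)
qed

lemma supp_vec_restr: "supp (vec_restr x T) = supp x \<inter> T"
  by (auto simp: supp_def vec_restr_def)

lemma fin_vec_restr: "fin_vec x \<Longrightarrow> fin_vec (vec_restr x T)"
  by (simp add: fin_vec_def supp_vec_restr)

lemma sqnorm_vec_restr: "sqnorm (vec_restr x T) = (\<Sum>t\<in>supp x \<inter> T. (cmod (x t))\<^sup>2)"
  unfolding sqnorm_def supp_vec_restr by (rule sum.cong) (auto simp: vec_restr_def)

lemma l2norm_vec_restr_le:
  assumes "fin_vec x"
  shows "l2norm (vec_restr x T) \<le> l2norm x"
proof -
  have "sqnorm (vec_restr x T) \<le> sqnorm x"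
    unfolding sqnorm_vec_restr by (unfold sqnorm_def, rule sum_mono2) (use assms in \<open>auto simp: fin_vec_def\<close>)
  then show ?thesis by (simp add: l2norm_eq_sqrt_sqnorm)
qed

lemma sum_sqnorm_vec_restr_le:
  assumes "fin_vec x" "finite V" "disjoint_family_on W V"
  shows "(\<Sum>v\<in>V. sqnorm (vec_restr x (W v))) \<le> sqnorm x"
proof -
  have fs: "finite (supp x)" using assms(1) by (simp add: fin_vec_def)
  have "(\<Sum>v\<in>V. sqnorm (vec_restr x (W v))) = (\<Sum>t\<in>(\<Union>v\<in>V. supp x \<inter> W v). (cmod (x t))\<^sup>2)"
    unfolding sqnorm_vec_restr
    by (rule sum.UNION_disjoint[symmetric]) (use assms fs in \<open>auto simp: disjoint_family_on_def\<close>)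
  also have "\<dots> \<le> sqnorm x"
    unfolding sqnorm_def by (rule sum_mono2) (use fs in auto)
  finally show ?thesis .
qed

lemma supp_translate:
  fixes x :: "'g::group_add \<Rightarrow> complex"
  shows "supp (\<lambda>s. x (s + g)) = (\<lambda>s. s + - g) ` supp x"
proof (intro equalityI subsetI)
  fix s assume "s \<in> supp (\<lambda>s. x (s + g))"
  then show "s \<in> (\<lambda>s. s + - g) ` supp x"
    by (intro image_eqI[where x = "s + g"]) (simp_all add: supp_def add.assoc)
qed (auto simp: supp_def add.assoc)

lemma fin_vec_translate: "fin_vec x \<Longrightarrow> fin_vec (\<lambda>s. x (s + (g::'g::group_add)))"
  by (simp add: fin_vec_def supp_translate)

lemma sum_translate:
  "(\<Sum>s\<in>(\<lambda>s. s + - g) ` A. F s) = (\<Sum>s\<in>A. F (s + - (g::'g::group_add)))"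
  by (rule sum.reindex_cong[OF _ refl refl]) (simp add: inj_on_def)

lemma l2norm_translate: "l2norm (\<lambda>s. x (s + (g::'g::group_add))) = l2norm x"
  unfolding l2norm_eq_sqrt_sqnorm sqnorm_def supp_translate sum_translate by (simp add: add.assoc)

lemma sum_norm_inj_le_sum_supp:
  assumes "finite T" "inj_on p T" "fin_vec c"
  shows "(\<Sum>t\<in>T. cmod (c (p t))) \<le> (\<Sum>g\<in>supp c. cmod (c g))"
proof -
  have "(\<Sum>t\<in>T. cmod (c (p t))) = (\<Sum>g\<in>p ` T. cmod (c g))"
    by (simp add: sum.reindex assms(2))
  also have "\<dots> \<le> (\<Sum>g\<in>supp c. cmod (c g))"
    by (rule sum_le_sum_if_nonzero_in) (use assms in \<open>auto simp: supp_def fin_vec_def\<close>)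
  finally show ?thesis .
qed

section \<open>Matrices of bounded operators\<close>

lemma mat_form_eq_sum_superset:
  assumes "finite S" "finite T" "supp \<eta> \<subseteq> S" "supp \<xi> \<subseteq> T"
  shows "mat_form A \<xi> \<eta> = (\<Sum>s\<in>S. \<Sum>t\<in>T. cnj (\<eta> s) * A s t * \<xi> t)"
proof -
  have "mat_form A \<xi> \<eta> = (\<Sum>s\<in>supp \<eta>. \<Sum>t\<in>T. cnj (\<eta> s) * A s t * \<xi> t)"
    unfolding mat_form_def
    by (intro sum.cong refl sum.mono_neutral_left) (use assms in \<open>auto simp: supp_def\<close>)
  also have "\<dots> = (\<Sum>s\<in>S. \<Sum>t\<in>T. cnj (\<eta> s) * A s t * \<xi> t)"
    by (rule sum.mono_neutral_left) (use assms in \<open>auto simp: supp_def\<close>)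
  finally show ?thesis .
qed

lemma norm_mat_form_le_sum:
  "cmod (mat_form A \<xi> \<eta>) \<le> (\<Sum>s\<in>supp \<eta>. \<Sum>t\<in>supp \<xi>. cmod (\<eta> s) * cmod (A s t) * cmod (\<xi> t))"
  unfolding mat_form_def
  by (rule order_trans[OF norm_sum], rule sum_mono, rule order_trans[OF norm_sum]) (simp add: norm_mult)

lemma mat_form_scale:
  assumes "fin_vec \<xi>" "fin_vec \<eta>"
  shows "mat_form A (\<lambda>i. a * \<xi> i) (\<lambda>i. b * \<eta> i) = a * cnj b * mat_form A \<xi> \<eta>"
proof -
  have "mat_form A (\<lambda>i. a * \<xi> i) (\<lambda>i. b * \<eta> i) =
     (\<Sum>s\<in>supp \<eta>. \<Sum>t\<in>supp \<xi>. cnj (b * \<eta> s) * A s t * (a * \<xi> t))"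
    by (rule mat_form_eq_sum_superset)
      (use assms supp_scale_subset[of a \<xi>] supp_scale_subset[of b \<eta>] in \<open>auto simp: fin_vec_def\<close>)
  also have "\<dots> = a * cnj b * mat_form A \<xi> \<eta>"
    unfolding mat_form_def sum_distrib_left by (intro sum.cong refl) (simp add: algebra_simps)
  finally show ?thesis .
qed

lemma mat_form_translate:
  fixes g :: "'g::group_add"
  shows "mat_form (\<lambda>s t. A (s + - g) (t + - g)) \<xi> \<eta> = mat_form A (\<lambda>s. \<xi> (s + g)) (\<lambda>s. \<eta> (s + g))"
  unfolding mat_form_def supp_translate sum_translate by (simp add: add.assoc)

lemma mat_form_vec_restr:
  assumes "fin_vec \<xi>" "fin_vec \<eta>" "\<And>s t. A s t \<noteq> 0 \<Longrightarrow> s \<in> S \<and> t \<in> T"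
  shows "mat_form A (vec_restr \<xi> T) (vec_restr \<eta> S) = mat_form A \<xi> \<eta>"
proof -
  have "mat_form A (vec_restr \<xi> T) (vec_restr \<eta> S) =
      (\<Sum>s\<in>supp \<eta>. \<Sum>t\<in>supp \<xi>. cnj (vec_restr \<eta> S s) * A s t * vec_restr \<xi> T t)"
    by (rule mat_form_eq_sum_superset) (use assms in \<open>auto simp: fin_vec_def supp_vec_restr\<close>)
  also have "\<dots> = mat_form A \<xi> \<eta>"
    unfolding mat_form_def by (intro sum.cong refl) (auto simp: vec_restr_def dest: assms(3))
  finally show ?thesis .
qed

definition unit_form_values :: "('i \<Rightarrow> 'i \<Rightarrow> complex) \<Rightarrow> real set" where
  "unit_form_values A = {cmod (mat_form A \<xi> \<eta>) | \<xi> \<eta>.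
      fin_vec \<xi> \<and> fin_vec \<eta> \<and> l2norm \<xi> \<le> 1 \<and> l2norm \<eta> \<le> 1}"

lemma mat_norm_eq_Sup: "mat_norm A = Sup (unit_form_values A)"
  by (simp add: mat_norm_def unit_form_values_def)

lemma zero_in_unit_form_values: "0 \<in> unit_form_values A"
  unfolding unit_form_values_def
  by (rule CollectI, rule exI[of _ "\<lambda>_. 0"], rule exI[of _ "\<lambda>_. 0"])
    (simp add: fin_vec_def l2norm_def mat_form_def supp_def)

lemma bdd_above_unit_form_values:
  assumes "mat_bounded A"
  shows "bdd_above (unit_form_values A)"
proof -
  obtain C where C: "\<And>\<xi> \<eta>. fin_vec \<xi> \<Longrightarrow> fin_vec \<eta> \<Longrightarrow>
      cmod (mat_form A \<xi> \<eta>) \<le> C * l2norm \<xi> * l2norm \<eta>"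
    using assms by (auto simp: mat_bounded_def)
  have "z \<le> max C 0" if z_in: "z \<in> unit_form_values A" for z
  proof -
    obtain \<xi> \<eta> where z: "z = cmod (mat_form A \<xi> \<eta>)" "fin_vec \<xi>" "fin_vec \<eta>"
      "l2norm \<xi> \<le> 1" "l2norm \<eta> \<le> 1"
      using z_in unfolding unit_form_values_def by blast
    have "z \<le> C * l2norm \<xi> * l2norm \<eta>" using C z by auto
    also have "\<dots> \<le> max C 0 * l2norm \<xi> * l2norm \<eta>"
      by (intro mult_right_mono) (auto simp: l2norm_nonneg)
    also have "\<dots> \<le> max C 0 * 1 * 1"
      using z by (intro mult_mono) (auto simp: l2norm_nonneg)
    finally show ?thesis by simp
  qed
  then show ?thesis by (auto simp: bdd_above_def)
qed

lemma mat_norm_nonneg: "mat_bounded A \<Longrightarrow> 0 \<le> mat_norm A"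
  unfolding mat_norm_eq_Sup
  by (rule cSup_upper[OF zero_in_unit_form_values bdd_above_unit_form_values])

lemma norm_mat_form_le:
  assumes "mat_bounded A" "fin_vec \<xi>" "fin_vec \<eta>"
  shows "cmod (mat_form A \<xi> \<eta>) \<le> mat_norm A * l2norm \<xi> * l2norm \<eta>"
proof (cases "l2norm \<xi> = 0 \<or> l2norm \<eta> = 0")
  case True
  then have "supp \<xi> = {} \<or> supp \<eta> = {}"
    using assms supp_eq_empty_if_l2norm_eq_0 by blast
  then show ?thesis using True by (auto simp: mat_form_def)
next
  case False
  then have pos: "0 < l2norm \<xi>" "0 < l2norm \<eta>"
    using l2norm_nonneg by (auto simp: order_le_less)
  define a where "a = complex_of_real (1 / l2norm \<xi>)"
  define b where "b = complex_of_real (1 / l2norm \<eta>)"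
  have ab: "cmod a = 1 / l2norm \<xi>" "cmod b = 1 / l2norm \<eta>"
    using pos unfolding a_def b_def norm_of_real by auto
  have "l2norm (\<lambda>i. a * \<xi> i) = 1" "l2norm (\<lambda>i. b * \<eta> i) = 1"
    using pos by (simp_all add: l2norm_scale assms ab)
  then have "cmod (mat_form A (\<lambda>i. a * \<xi> i) (\<lambda>i. b * \<eta> i)) \<in> unit_form_values A"
    unfolding unit_form_values_def using assms(2,3) fin_vec_scale by fastforce
  then have "cmod (mat_form A (\<lambda>i. a * \<xi> i) (\<lambda>i. b * \<eta> i)) \<le> mat_norm A"
    unfolding mat_norm_eq_Sup by (rule cSup_upper[OF _ bdd_above_unit_form_values[OF assms(1)]])
  moreover have "cmod (mat_form A (\<lambda>i. a * \<xi> i) (\<lambda>i. b * \<eta> i)) =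
      cmod (mat_form A \<xi> \<eta>) / (l2norm \<xi> * l2norm \<eta>)"
    by (simp add: mat_form_scale assms norm_mult ab)
  ultimately show ?thesis using pos by (simp add: divide_le_eq mult.assoc)
qed

lemma mat_bounded_normI:
  assumes "0 \<le> R"
    and "\<And>\<xi> \<eta>. fin_vec \<xi> \<Longrightarrow> fin_vec \<eta> \<Longrightarrow> cmod (mat_form A \<xi> \<eta>) \<le> R * l2norm \<xi> * l2norm \<eta>"
  shows "mat_bounded A" "mat_norm A \<le> R"
proof -
  show "mat_bounded A" unfolding mat_bounded_def using assms(2) by blast
  have "z \<le> R" if z_in: "z \<in> unit_form_values A" for z
  proof -
    obtain \<xi> \<eta> where z: "z = cmod (mat_form A \<xi> \<eta>)" "fin_vec \<xi>" "fin_vec \<eta>"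
      "l2norm \<xi> \<le> 1" "l2norm \<eta> \<le> 1"
      using z_in unfolding unit_form_values_def by blast
    have "z \<le> R * l2norm \<xi> * l2norm \<eta>" using assms(2) z by auto
    also have "\<dots> \<le> R * 1 * 1"
      using z assms(1) by (intro mult_mono) (auto simp: l2norm_nonneg)
    finally show ?thesis by simp
  qed
  then show "mat_norm A \<le> R"
    unfolding mat_norm_eq_Sup using zero_in_unit_form_values by (intro cSup_least) auto
qed

lemma norm_entry_le_mat_norm:
  assumes "mat_bounded A"
  shows "cmod (A s t) \<le> mat_norm A"
proof -
  define e where "e a = (\<lambda>x. if x = a then 1 else 0 :: complex)" for a :: 'a
  have supp_e: "supp (e a) = {a}" for a by (auto simp: supp_def e_def)
  have e: "fin_vec (e a)" "l2norm (e a) = 1" for a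
    unfolding fin_vec_def l2norm_def supp_e by (simp_all add: e_def)
  have "mat_form A (e t) (e s) = A s t"
    unfolding mat_form_def supp_e by (simp add: e_def)
  then show ?thesis using norm_mat_form_le[OF assms e(1) e(1), of t s] by (simp add: e(2))
qed

lemma mat_bounded_schur_test:
  assumes rows: "\<And>s T. finite T \<Longrightarrow> (\<Sum>t\<in>T. cmod (M s t)) \<le> R"
    and cols: "\<And>t S. finite S \<Longrightarrow> (\<Sum>s\<in>S. cmod (M s t)) \<le> R"
  shows "mat_bounded M"
proof -
  have R: "0 \<le> R" using rows[of "{}"] by simp
  have "cmod (mat_form M \<xi> \<eta>) \<le> R * l2norm \<xi> * l2norm \<eta>" if "fin_vec \<xi>" "fin_vec \<eta>" for \<xi> \<eta>
  proof -
    define S T where "S = supp \<eta>" and "T = supp \<xi>"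
    have fin: "finite S" "finite T" using that by (auto simp: S_def T_def fin_vec_def)
    \<comment> \<open>split each entry as sqrt |M s t| times sqrt |M s t| and apply Cauchy-Schwarz\<close>
    define a where "a p = cmod (\<eta> (fst p)) * sqrt (cmod (M (fst p) (snd p)))" for p
    define b where "b p = sqrt (cmod (M (fst p) (snd p))) * cmod (\<xi> (snd p))" for p
    have "cmod (mat_form M \<xi> \<eta>) \<le> (\<Sum>s\<in>S. \<Sum>t\<in>T. cmod (\<eta> s) * cmod (M s t) * cmod (\<xi> t))"
      unfolding S_def T_def by (rule norm_mat_form_le_sum)
    also have "\<dots> = (\<Sum>p\<in>S \<times> T. a p * b p)"
      unfolding sum.cartesian_product a_def b_def
      by (intro sum.cong refl) (simp add: algebra_simps case_prod_beta)
    also have "\<dots> \<le> sqrt (\<Sum>p\<in>S \<times> T. (a p)\<^sup>2) * sqrt (\<Sum>p\<in>S \<times> T. (b p)\<^sup>2)"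
      by (rule sum_mult_le_sqrt_sum_squares)
    also have "\<dots> \<le> sqrt (R * sqnorm \<eta>) * sqrt (R * sqnorm \<xi>)"
    proof (intro mult_mono real_sqrt_le_mono)
      have "(\<Sum>p\<in>S \<times> T. (a p)\<^sup>2) = (\<Sum>s\<in>S. (cmod (\<eta> s))\<^sup>2 * (\<Sum>t\<in>T. cmod (M s t)))"
        unfolding sum.cartesian_product' a_def sum_distrib_left
        by (intro sum.cong refl) (simp add: power_mult_distrib)
      also have "\<dots> \<le> (\<Sum>s\<in>S. (cmod (\<eta> s))\<^sup>2 * R)"
        by (intro sum_mono mult_left_mono rows fin) simp
      also have "\<dots> = R * sqnorm \<eta>"
        by (simp add: sqnorm_def S_def sum_distrib_left sum_distrib_right mult.commute)
      finally show "(\<Sum>p\<in>S \<times> T. (a p)\<^sup>2) \<le> R * sqnorm \<eta>" .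
      have "(\<Sum>p\<in>S \<times> T. (b p)\<^sup>2) = (\<Sum>t\<in>T. (cmod (\<xi> t))\<^sup>2 * (\<Sum>s\<in>S. cmod (M s t)))"
        unfolding sum.cartesian_product' b_def sum_distrib_left
        by (subst sum.swap) (intro sum.cong refl, simp add: power_mult_distrib mult.commute)
      also have "\<dots> \<le> (\<Sum>t\<in>T. (cmod (\<xi> t))\<^sup>2 * R)"
        by (intro sum_mono mult_left_mono cols fin) simp
      also have "\<dots> = R * sqnorm \<xi>"
        by (simp add: sqnorm_def T_def sum_distrib_left sum_distrib_right mult.commute)
      finally show "(\<Sum>p\<in>S \<times> T. (b p)\<^sup>2) \<le> R * sqnorm \<xi>" .
    qed (auto simp: R sqnorm_nonneg sum_nonneg)
    also have "\<dots> = R * l2norm \<xi> * l2norm \<eta>"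
      using R by (simp add: l2norm_eq_sqrt_sqnorm real_sqrt_mult)
    finally show ?thesis .
  qed
  then show ?thesis using mat_bounded_normI(1)[OF R] by blast
qed

lemma some_mem_disjoint_family:
  assumes "disjoint_family W" "s \<in> W m"
  shows "(SOME m. s \<in> W m) = m"
proof -
  have "s \<in> W (SOME m. s \<in> W m)" using assms(2) by (rule someI)
  then show ?thesis using assms disjoint_family_onD[OF assms(1) UNIV_I UNIV_I] by blast
qed

lemma finite_blocks_meeting:
  assumes "disjoint_family W" "finite S"
  shows "finite {v. W v \<inter> S \<noteq> {}}"
proof -
  have "{v. W v \<inter> S \<noteq> {}} \<subseteq> (\<lambda>s. SOME v. s \<in> W v) ` S"
  proof
    fix v assume "v \<in> {v. W v \<inter> S \<noteq> {}}"
    then obtain s where s: "s \<in> S" "s \<in> W v" by auto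
    then show "v \<in> (\<lambda>s. SOME v. s \<in> W v) ` S"
      using some_mem_disjoint_family[OF assms(1) s(2)] by force
  qed
  then show ?thesis using assms(2) finite_surj by blast
qed

lemma mat_form_block_diagonal:
  assumes disj: "disjoint_family W"
    and blocks: "\<And>s t. M s t \<noteq> 0 \<Longrightarrow> \<exists>v. s \<in> W v \<and> t \<in> W v"
    and fin: "fin_vec \<xi>" "fin_vec \<eta>"
  shows "mat_form M \<xi> \<eta> =
    (\<Sum>v\<in>{v. W v \<inter> supp \<eta> \<noteq> {}}. mat_form M (vec_restr \<xi> (W v)) (vec_restr \<eta> (W v)))"
proof -
  define V where "V = {v. W v \<inter> supp \<eta> \<noteq> {}}"
  define D where "D v = (supp \<eta> \<inter> W v) \<times> (supp \<xi> \<inter> W v)" for v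
  define c where "c p = cnj (\<eta> (fst p)) * M (fst p) (snd p) * \<xi> (snd p)" for p
  have fs: "finite (supp \<xi>)" "finite (supp \<eta>)" using fin by (auto simp: fin_vec_def)
  have fV: "finite V" unfolding V_def by (rule finite_blocks_meeting[OF disj fs(2)])
  have "mat_form M (vec_restr \<xi> (W v)) (vec_restr \<eta> (W v)) = (\<Sum>p\<in>D v. c p)" for v
    unfolding mat_form_def supp_vec_restr D_def sum.cartesian_product' c_def
    by (intro sum.cong refl) (auto simp: vec_restr_def)
  then have "(\<Sum>v\<in>V. mat_form M (vec_restr \<xi> (W v)) (vec_restr \<eta> (W v))) = (\<Sum>v\<in>V. \<Sum>p\<in>D v. c p)"
    by simp
  also have "\<dots> = (\<Sum>p\<in>(\<Union>v\<in>V. D v). c p)"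
  proof (rule sum.UNION_disjoint[symmetric])
    show "\<forall>v\<in>V. \<forall>w\<in>V. v \<noteq> w \<longrightarrow> D v \<inter> D w = {}"
      using disjoint_family_onD[OF disj] by (fastforce simp: D_def)
  next
    show "\<forall>v\<in>V. finite (D v)" using fs by (simp add: D_def)
  qed (rule fV)
  also have "\<dots> = (\<Sum>p\<in>supp \<eta> \<times> supp \<xi>. c p)"
  proof (rule sum.mono_neutral_left)
    show "\<forall>p\<in>supp \<eta> \<times> supp \<xi> - (\<Union>v\<in>V. D v). c p = 0"
    proof (rule ballI, rule ccontr)
      fix p assume p: "p \<in> supp \<eta> \<times> supp \<xi> - (\<Union>v\<in>V. D v)" and "c p \<noteq> 0"
      then have "M (fst p) (snd p) \<noteq> 0" by (auto simp: c_def)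
      then obtain v where "fst p \<in> W v" "snd p \<in> W v" using blocks by blast
      then have "v \<in> V" "p \<in> D v" using p by (auto simp: V_def D_def)
      then show False using p by blast
    qed
  next
    show "finite (supp \<eta> \<times> supp \<xi>)" using fs by simp
    show "(\<Union>v\<in>V. D v) \<subseteq> supp \<eta> \<times> supp \<xi>" by (auto simp: D_def)
  qed
  also have "\<dots> = mat_form M \<xi> \<eta>"
    by (simp add: mat_form_def sum.cartesian_product' c_def)
  finally show ?thesis by (simp add: V_def)
qed

lemma mat_norm_le_block_diagonal:
  assumes R: "0 \<le> R" and disj: "disjoint_family W"
    and blocks: "\<And>s t. M s t \<noteq> 0 \<Longrightarrow> \<exists>v. s \<in> W v \<and> t \<in> W v"
    and block_bound: "\<And>v \<xi> \<eta>. fin_vec \<xi> \<Longrightarrow> fin_vec \<eta> \<Longrightarrow> supp \<xi> \<subseteq> W v \<Longrightarrow> supp \<eta> \<subseteq> W v \<Longrightarrow>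
      cmod (mat_form M \<xi> \<eta>) \<le> R * l2norm \<xi> * l2norm \<eta>"
  shows "mat_bounded M" "mat_norm M \<le> R"
proof -
  have "cmod (mat_form M \<xi> \<eta>) \<le> R * l2norm \<xi> * l2norm \<eta>" if fin: "fin_vec \<xi>" "fin_vec \<eta>" for \<xi> \<eta>
  proof -
    define V where "V = {v. W v \<inter> supp \<eta> \<noteq> {}}"
    define x y where "x v = vec_restr \<xi> (W v)" and "y v = vec_restr \<eta> (W v)" for v
    have fxy: "fin_vec (x v)" "fin_vec (y v)" for v
      by (simp_all add: x_def y_def fin_vec_restr fin)
    have disjV: "disjoint_family_on W V" using disj by (simp add: disjoint_family_on_def)
    have "finite V"
      unfolding V_def using disj fin(2) by (simp add: finite_blocks_meeting fin_vec_def)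
    have "mat_form M \<xi> \<eta> = (\<Sum>v\<in>V. mat_form M (x v) (y v))"
      unfolding V_def x_def y_def by (rule mat_form_block_diagonal[OF disj blocks fin])
    then have "cmod (mat_form M \<xi> \<eta>) \<le> (\<Sum>v\<in>V. cmod (mat_form M (x v) (y v)))"
      by (simp add: norm_sum)
    also have "\<dots> \<le> (\<Sum>v\<in>V. R * (l2norm (x v) * l2norm (y v)))"
    proof (intro sum_mono)
      fix v
      have "supp (x v) \<subseteq> W v" "supp (y v) \<subseteq> W v" by (auto simp: x_def y_def supp_vec_restr)
      then show "cmod (mat_form M (x v) (y v)) \<le> R * (l2norm (x v) * l2norm (y v))"
        using block_bound[OF fxy] by (simp add: mult.assoc)
    qed
    also have "\<dots> \<le> R * (sqrt (\<Sum>v\<in>V. (l2norm (x v))\<^sup>2) * sqrt (\<Sum>v\<in>V. (l2norm (y v))\<^sup>2))"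
      unfolding sum_distrib_left[symmetric] by (intro mult_left_mono sum_mult_le_sqrt_sum_squares R)
    also have "\<dots> \<le> R * (l2norm \<xi> * l2norm \<eta>)"
      unfolding l2norm_power2 l2norm_eq_sqrt_sqnorm[of \<xi>] l2norm_eq_sqrt_sqnorm[of \<eta>] x_def y_def
      by (intro mult_left_mono mult_mono real_sqrt_le_mono sum_sqnorm_vec_restr_le fin disjV R)
        (auto simp: sum_nonneg sqnorm_nonneg \<open>finite V\<close>)
    finally show ?thesis by (simp add: mult.assoc)
  qed
  then show "mat_bounded M" "mat_norm M \<le> R" using mat_bounded_normI[OF R] by blast+
qed

section \<open>Schur multipliers\<close>

abbreviation toeplitz :: "('g::group_add \<Rightarrow> complex) \<Rightarrow> 'g \<Rightarrow> 'g \<Rightarrow> complex" where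
  "toeplitz \<phi> \<equiv> (\<lambda>s t. \<phi> (s + - t))"

abbreviation schur_prod :: "('i \<Rightarrow> 'i \<Rightarrow> complex) \<Rightarrow> ('i \<Rightarrow> 'i \<Rightarrow> complex) \<Rightarrow> 'i \<Rightarrow> 'i \<Rightarrow> complex" where
  "schur_prod K A \<equiv> (\<lambda>s t. K s t * A s t)"

definition schur_bound :: "('i \<Rightarrow> 'i \<Rightarrow> complex) \<Rightarrow> real \<Rightarrow> bool" where
  "schur_bound K C \<longleftrightarrow> 0 \<le> C \<and> (\<forall>A. mat_bounded A \<longrightarrow> mat_norm (schur_prod K A) \<le> C * mat_norm A)"

text \<open>A finitely supported X on J \<times> I factors as X (j, t) = fiber_dir X j t * fiber_norm X t
  (where fiber_norm X t = 0 the whole fibre vanishes, so the junk value X (j, t) / 0 = 0 is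
  harmless). fiber_lift X is a contraction from l2(I) to l2(J \<times> I), and compressing M by these
  contractions turns the amplified Schur product into an ordinary one.\<close>

definition fiber_norm :: "('j \<times> 'i \<Rightarrow> complex) \<Rightarrow> 'i \<Rightarrow> complex" where
  "fiber_norm X t = complex_of_real (sqrt (\<Sum>j\<in>fst ` supp X. (cmod (X (j, t)))\<^sup>2))"

definition fiber_dir :: "('j \<times> 'i \<Rightarrow> complex) \<Rightarrow> 'j \<Rightarrow> 'i \<Rightarrow> complex" where
  "fiber_dir X j t = X (j, t) / fiber_norm X t"

definition fiber_lift :: "('j \<times> 'i \<Rightarrow> complex) \<Rightarrow> ('i \<Rightarrow> complex) \<Rightarrow> 'j \<times> 'i \<Rightarrow> complex" where
  "fiber_lift X x = (\<lambda>(j, t). if j \<in> fst ` supp X then fiber_dir X j t * x t else 0)"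

definition compress :: "('j \<times> 'i \<Rightarrow> 'j \<times> 'i \<Rightarrow> complex) \<Rightarrow> ('j \<times> 'i \<Rightarrow> complex)
    \<Rightarrow> ('j \<times> 'i \<Rightarrow> complex) \<Rightarrow> 'i \<Rightarrow> 'i \<Rightarrow> complex" where
  "compress M X Y s t =
    (\<Sum>i\<in>fst ` supp Y. \<Sum>j\<in>fst ` supp X. cnj (fiber_dir Y i s) * M (i, s) (j, t) * fiber_dir X j t)"

lemma norm_fiber_norm_power2: "(cmod (fiber_norm X t))\<^sup>2 = (\<Sum>j\<in>fst ` supp X. (cmod (X (j, t)))\<^sup>2)"
  by (simp add: fiber_norm_def sum_nonneg)

lemma fiber_decomp:
  assumes "fin_vec X"
  shows "X (j, t) = fiber_dir X j t * fiber_norm X t"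
proof (cases "fiber_norm X t = 0")
  case True
  have "finite (fst ` supp X)" using assms by (simp add: fin_vec_def)
  then have "\<forall>j\<in>fst ` supp X. (cmod (X (j, t)))\<^sup>2 = 0"
    using norm_fiber_norm_power2[of X t] True by (simp add: sum_nonneg_eq_0_iff)
  then have "X (j, t) = 0" by (force simp: supp_def)
  then show ?thesis using True by simp
qed (simp add: fiber_dir_def)

lemma sum_fiber_dir_le: "(\<Sum>j\<in>fst ` supp X. (cmod (fiber_dir X j t))\<^sup>2) \<le> 1"
proof (cases "fiber_norm X t = 0")
  case False
  have "(\<Sum>j\<in>fst ` supp X. (cmod (fiber_dir X j t))\<^sup>2) =
      (\<Sum>j\<in>fst ` supp X. (cmod (X (j, t)))\<^sup>2) / (cmod (fiber_norm X t))\<^sup>2"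
    by (simp add: fiber_dir_def norm_divide power_divide sum_divide_distrib)
  then show ?thesis using False by (simp add: norm_fiber_norm_power2)
qed (simp add: fiber_dir_def)

lemma supp_fiber_norm: "supp (fiber_norm X) \<subseteq> snd ` supp X"
proof
  fix t assume "t \<in> supp (fiber_norm X)"
  then have "(\<Sum>j\<in>fst ` supp X. (cmod (X (j, t)))\<^sup>2) \<noteq> 0"
    by (simp add: supp_def fiber_norm_def)
  then obtain j where "X (j, t) \<noteq> 0" using sum.neutral by force
  then show "t \<in> snd ` supp X" by (force simp: supp_def)
qed

lemma supp_subset_fibers: "supp X \<subseteq> fst ` supp X \<times> snd ` supp X"
proof
  fix q assume q: "q \<in> supp X"
  show "q \<in> fst ` supp X \<times> snd ` supp X"
    using imageI[OF q, of fst] imageI[OF q, of snd] by (simp add: mem_Times_iff)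
qed

lemma l2norm_fiber_norm:
  assumes "fin_vec X"
  shows "fin_vec (fiber_norm X)" "l2norm (fiber_norm X) = l2norm X"
proof -
  have fX: "finite (supp X)" using assms by (simp add: fin_vec_def)
  show "fin_vec (fiber_norm X)"
    by (rule fin_vec_if_supp_subset[OF _ supp_fiber_norm]) (simp add: fX)
  have "sqnorm (fiber_norm X) = (\<Sum>t\<in>snd ` supp X. \<Sum>j\<in>fst ` supp X. (cmod (X (j, t)))\<^sup>2)"
    by (simp add: sqnorm_eq_sum_superset[OF _ supp_fiber_norm] fX norm_fiber_norm_power2)
  also have "\<dots> = (\<Sum>q\<in>fst ` supp X \<times> snd ` supp X. (cmod (X q))\<^sup>2)"
    by (subst sum.swap) (simp add: sum.cartesian_product)
  also have "\<dots> = sqnorm X"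
    by (rule sqnorm_eq_sum_superset[symmetric]) (simp_all add: fX supp_subset_fibers)
  finally show "l2norm (fiber_norm X) = l2norm X" by (simp add: l2norm_eq_sqrt_sqnorm)
qed

lemma supp_fiber_lift: "supp (fiber_lift X x) \<subseteq> fst ` supp X \<times> supp x"
  by (auto simp: supp_def fiber_lift_def split: if_splits)

lemma l2norm_fiber_lift:
  assumes "fin_vec X" "fin_vec x"
  shows "fin_vec (fiber_lift X x)" "l2norm (fiber_lift X x) \<le> l2norm x"
proof -
  have fin: "finite (fst ` supp X)" "finite (supp x)" using assms by (simp_all add: fin_vec_def)
  show "fin_vec (fiber_lift X x)"
    by (rule fin_vec_if_supp_subset[OF _ supp_fiber_lift]) (simp add: fin)
  have "sqnorm (fiber_lift X x) = (\<Sum>q\<in>fst ` supp X \<times> supp x. (cmod (fiber_lift X x q))\<^sup>2)"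
    by (rule sqnorm_eq_sum_superset[OF _ supp_fiber_lift]) (simp add: fin)
  also have "\<dots> = (\<Sum>j\<in>fst ` supp X. \<Sum>t\<in>supp x. (cmod (fiber_dir X j t))\<^sup>2 * (cmod (x t))\<^sup>2)"
    by (simp add: sum.cartesian_product' fiber_lift_def norm_mult power_mult_distrib)
  also have "\<dots> = (\<Sum>t\<in>supp x. (cmod (x t))\<^sup>2 * (\<Sum>j\<in>fst ` supp X. (cmod (fiber_dir X j t))\<^sup>2))"
    by (subst sum.swap) (simp add: sum_distrib_left mult.commute)
  also have "\<dots> \<le> (\<Sum>t\<in>supp x. (cmod (x t))\<^sup>2 * 1)"
    by (intro sum_mono mult_left_mono sum_fiber_dir_le) simp
  finally show "l2norm (fiber_lift X x) \<le> l2norm x"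
    by (simp add: l2norm_eq_sqrt_sqnorm sqnorm_def)
qed

lemma mat_form_compress:
  assumes "fin_vec X" "fin_vec Y" "fin_vec x" "fin_vec y"
  shows "mat_form (compress M X Y) x y = mat_form M (fiber_lift X x) (fiber_lift Y y)"
proof -
  have fin: "finite (fst ` supp X)" "finite (fst ` supp Y)" "finite (supp x)" "finite (supp y)"
    using assms by (simp_all add: fin_vec_def)
  have "mat_form M (fiber_lift X x) (fiber_lift Y y) = (\<Sum>p\<in>fst ` supp Y \<times> supp y. \<Sum>q\<in>fst ` supp X \<times> supp x.
      cnj (fiber_lift Y y p) * M p q * fiber_lift X x q)"
    by (rule mat_form_eq_sum_superset) (simp_all add: fin supp_fiber_lift)
  also have "\<dots> = (\<Sum>s\<in>supp y. \<Sum>t\<in>supp x. \<Sum>i\<in>fst ` supp Y. \<Sum>j\<in>fst ` supp X.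
      cnj (y s) * (cnj (fiber_dir Y i s) * M (i, s) (j, t) * fiber_dir X j t) * x t)"
    unfolding sum_pairs_swap[of "\<lambda>i s j t. cnj (fiber_lift Y y (i, s)) * M (i, s) (j, t) * fiber_lift X x (j, t)", simplified]
    by (intro sum.cong refl) (simp add: fiber_lift_def mult_ac)
  also have "\<dots> = mat_form (compress M X Y) x y"
    by (simp add: mat_form_def compress_def sum_distrib_left sum_distrib_right)
  finally show ?thesis by simp
qed

lemma mat_norm_compress_le:
  assumes "mat_bounded M" "fin_vec X" "fin_vec Y"
  shows "mat_bounded (compress M X Y)" "mat_norm (compress M X Y) \<le> mat_norm M"
proof -
  have "cmod (mat_form (compress M X Y) x y) \<le> mat_norm M * l2norm x * l2norm y"
    if "fin_vec x" "fin_vec y" for x y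
  proof -
    note lift = l2norm_fiber_lift[OF assms(2) that(1)] l2norm_fiber_lift[OF assms(3) that(2)]
    have "cmod (mat_form (compress M X Y) x y) = cmod (mat_form M (fiber_lift X x) (fiber_lift Y y))"
      by (simp add: mat_form_compress assms that)
    also have "\<dots> \<le> mat_norm M * l2norm (fiber_lift X x) * l2norm (fiber_lift Y y)"
      by (rule norm_mat_form_le[OF assms(1) lift(1) lift(3)])
    also have "\<dots> \<le> mat_norm M * l2norm x * l2norm y"
      using lift mat_norm_nonneg[OF assms(1)] by (intro mult_mono) (auto simp: l2norm_nonneg)
    finally show ?thesis .
  qed
  then show "mat_bounded (compress M X Y)" "mat_norm (compress M X Y) \<le> mat_norm M"
    using mat_bounded_normI[OF mat_norm_nonneg[OF assms(1)]] by blast+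
qed

lemma mat_form_ampliation:
  assumes "fin_vec X" "fin_vec Y"
  shows "mat_form (\<lambda>p q. K (snd p) (snd q) * M p q) X Y =
    mat_form (schur_prod K (compress M X Y)) (fiber_norm X) (fiber_norm Y)"
proof -
  have fin: "finite (fst ` supp X)" "finite (fst ` supp Y)" "finite (snd ` supp X)" "finite (snd ` supp Y)"
    using assms by (simp_all add: fin_vec_def)
  have "mat_form (\<lambda>p q. K (snd p) (snd q) * M p q) X Y =
    (\<Sum>p\<in>fst ` supp Y \<times> snd ` supp Y. \<Sum>q\<in>fst ` supp X \<times> snd ` supp X. cnj (Y p) * (K (snd p) (snd q) * M p q) * X q)"
    by (rule mat_form_eq_sum_superset) (simp_all add: fin supp_subset_fibers)
  also have "\<dots> = (\<Sum>s\<in>snd ` supp Y. \<Sum>t\<in>snd ` supp X. \<Sum>i\<in>fst ` supp Y. \<Sum>j\<in>fst ` supp X.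
      cnj (fiber_norm Y s) * (K s t * (cnj (fiber_dir Y i s) * M (i, s) (j, t) * fiber_dir X j t)) * fiber_norm X t)"
    unfolding sum_pairs_swap[of "\<lambda>i s j t. cnj (Y (i, s)) * (K s t * M (i, s) (j, t)) * X (j, t)", simplified]
    by (intro sum.cong refl) (simp add: fiber_decomp[OF assms(1)] fiber_decomp[OF assms(2)] mult_ac)
  also have "\<dots> = (\<Sum>s\<in>snd ` supp Y. \<Sum>t\<in>snd ` supp X.
      cnj (fiber_norm Y s) * (K s t * compress M X Y s t) * fiber_norm X t)"
    by (simp add: compress_def sum_distrib_left sum_distrib_right)
  also have "\<dots> = mat_form (schur_prod K (compress M X Y)) (fiber_norm X) (fiber_norm Y)"
    by (rule mat_form_eq_sum_superset[symmetric]) (simp_all add: fin supp_fiber_norm)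
  finally show ?thesis .
qed

lemma mat_norm_ampliation_le:
  assumes "schur_mult K" "schur_bound K C" "mat_bounded M"
  shows "mat_norm (\<lambda>p q. K (snd p) (snd q) * M p q) \<le> C * mat_norm M"
proof -
  have C: "0 \<le> C" using assms(2) by (simp add: schur_bound_def)
  have R: "0 \<le> C * mat_norm M" using C mat_norm_nonneg[OF assms(3)] by simp
  have bound: "cmod (mat_form (\<lambda>p q. K (snd p) (snd q) * M p q) X Y) \<le> C * mat_norm M * l2norm X * l2norm Y"
    if "fin_vec X" "fin_vec Y" for X Y
  proof -
    note B = mat_norm_compress_le[OF assms(3) that]
    have KB: "mat_bounded (schur_prod K (compress M X Y))"
      using assms(1) B(1) by (simp add: schur_mult_def)
    note N = l2norm_fiber_norm[OF that(1)] l2norm_fiber_norm[OF that(2)]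
    have "cmod (mat_form (\<lambda>p q. K (snd p) (snd q) * M p q) X Y) =
        cmod (mat_form (schur_prod K (compress M X Y)) (fiber_norm X) (fiber_norm Y))"
      by (simp add: mat_form_ampliation that)
    also have "\<dots> \<le> mat_norm (schur_prod K (compress M X Y)) * l2norm X * l2norm Y"
      using norm_mat_form_le[OF KB N(1) N(3)] by (simp add: N)
    also have "\<dots> \<le> C * mat_norm M * l2norm X * l2norm Y"
    proof (intro mult_right_mono l2norm_nonneg)
      have "mat_norm (schur_prod K (compress M X Y)) \<le> C * mat_norm (compress M X Y)"
        using assms(2) B(1) by (simp add: schur_bound_def)
      also have "\<dots> \<le> C * mat_norm M" by (rule mult_left_mono[OF B(2) C])
      finally show "mat_norm (schur_prod K (compress M X Y)) \<le> C * mat_norm M" .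
    qed
    finally show ?thesis .
  qed
  show ?thesis by (rule mat_bounded_normI(2)[OF R bound])
qed

section \<open>Uniform bounds for Schur multipliers\<close>

lemma schur_bound_finite:
  assumes "finite (UNIV :: 'i set)"
  shows "\<exists>C. schur_bound (K :: 'i \<Rightarrow> 'i \<Rightarrow> complex) C"
proof -
  define C where "C = (\<Sum>s\<in>UNIV. \<Sum>t\<in>UNIV. cmod (K s t))"
  have C: "0 \<le> C" by (simp add: C_def sum_nonneg)
  have "mat_norm (schur_prod K A) \<le> C * mat_norm A" if A: "mat_bounded A" for A
  proof (rule mat_bounded_normI(2))
    show "0 \<le> C * mat_norm A" using C mat_norm_nonneg[OF A] by simp
    fix \<xi> \<eta> :: "'i \<Rightarrow> complex" assume fin: "fin_vec \<xi>" "fin_vec \<eta>"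
    define c where "c = mat_norm A * l2norm \<xi> * l2norm \<eta>"
    have c: "0 \<le> c" using mat_norm_nonneg[OF A] by (simp add: c_def l2norm_nonneg)
    have entry: "cmod (\<eta> s) * cmod (K s t * A s t) * cmod (\<xi> t) \<le> cmod (K s t) * c" for s t
    proof -
      have "cmod (A s t) * cmod (\<xi> t) * cmod (\<eta> s) \<le> c"
        unfolding c_def using mat_norm_nonneg[OF A]
        by (intro mult_mono norm_entry_le_mat_norm[OF A] norm_le_l2norm fin) (auto simp: l2norm_nonneg)
      then have "cmod (K s t) * (cmod (A s t) * cmod (\<xi> t) * cmod (\<eta> s)) \<le> cmod (K s t) * c"
        by (rule mult_left_mono) simp
      then show ?thesis by (simp add: norm_mult mult_ac)
    qed
    have "cmod (mat_form (schur_prod K A) \<xi> \<eta>) \<le>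
        (\<Sum>s\<in>supp \<eta>. \<Sum>t\<in>supp \<xi>. cmod (\<eta> s) * cmod (K s t * A s t) * cmod (\<xi> t))"
      by (rule norm_mat_form_le_sum)
    also have "\<dots> \<le> (\<Sum>s\<in>supp \<eta>. \<Sum>t\<in>supp \<xi>. cmod (K s t) * c)"
      by (intro sum_mono entry)
    also have "\<dots> \<le> (\<Sum>s\<in>supp \<eta>. \<Sum>t\<in>UNIV. cmod (K s t) * c)"
      by (intro sum_mono sum_mono2 assms) (simp_all add: c)
    also have "\<dots> \<le> (\<Sum>s\<in>UNIV. \<Sum>t\<in>UNIV. cmod (K s t) * c)"
      by (intro sum_mono2 assms) (simp_all add: c sum_nonneg)
    also have "\<dots> = C * mat_norm A * l2norm \<xi> * l2norm \<eta>"
      by (simp add: C_def c_def sum_distrib_right mult.assoc)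
    finally show "cmod (mat_form (schur_prod K A) \<xi> \<eta>) \<le> C * mat_norm A * l2norm \<xi> * l2norm \<eta>" .
  qed
  then show ?thesis using C unfolding schur_bound_def by blast
qed

definition schur_witness :: "('i \<Rightarrow> 'i \<Rightarrow> complex) \<Rightarrow> real \<Rightarrow> ('i \<Rightarrow> 'i \<Rightarrow> complex)
    \<Rightarrow> ('i \<Rightarrow> complex) \<Rightarrow> ('i \<Rightarrow> complex) \<Rightarrow> bool" where
  "schur_witness K R P \<xi> \<eta> \<longleftrightarrow> mat_bounded P \<and> mat_norm P \<le> 1 \<and>
    (\<forall>s t. P s t \<noteq> 0 \<longrightarrow> s \<in> supp \<eta> \<and> t \<in> supp \<xi>) \<and>
    fin_vec \<xi> \<and> fin_vec \<eta> \<and> l2norm \<xi> \<le> 1 \<and> l2norm \<eta> \<le> 1 \<and> R < cmod (mat_form (schur_prod K P) \<xi> \<eta>)"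

lemma mat_norm_cutoff_le:
  assumes "mat_bounded A"
  shows "mat_bounded (\<lambda>s t. if s \<in> S \<and> t \<in> T then c * A s t else 0)"
    "mat_norm (\<lambda>s t. if s \<in> S \<and> t \<in> T then c * A s t else 0) \<le> cmod c * mat_norm A"
proof -
  let ?P = "\<lambda>s t. if s \<in> S \<and> t \<in> T then c * A s t else 0"
  have "cmod (mat_form ?P x y) \<le> cmod c * mat_norm A * l2norm x * l2norm y" if "fin_vec x" "fin_vec y" for x y
  proof -
    define x' y' where "x' = vec_restr x T" and "y' = vec_restr y S"
    have "mat_form ?P x y = mat_form ?P x' y'"
      unfolding x'_def y'_def by (rule mat_form_vec_restr[symmetric]) (auto simp: that split: if_splits)
    also have "\<dots> = c * mat_form A x' y'"
      unfolding mat_form_def sum_distrib_left x'_def y'_def supp_vec_restr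
      by (intro sum.cong refl) (simp add: mult_ac)
    also have "cmod \<dots> \<le> cmod c * (mat_norm A * l2norm x' * l2norm y')"
      unfolding norm_mult
      by (intro mult_left_mono norm_mat_form_le[OF assms]) (simp_all add: x'_def y'_def fin_vec_restr that)
    also have "\<dots> \<le> cmod c * mat_norm A * l2norm x * l2norm y"
      unfolding x'_def y'_def using that mat_norm_nonneg[OF assms]
      by (simp add: mult.assoc mult_left_mono mult_mono l2norm_vec_restr_le l2norm_nonneg)
    finally show ?thesis .
  qed
  then show "mat_bounded ?P" "mat_norm ?P \<le> cmod c * mat_norm A"
    using mat_bounded_normI[of "cmod c * mat_norm A" ?P] mat_norm_nonneg[OF assms] by auto
qed

lemma schur_witness_exists:
  assumes "schur_mult K" "mat_bounded A" "R * mat_norm A < mat_norm (schur_prod K A)"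
  shows "\<exists>P \<xi> \<eta>. schur_witness K R P \<xi> \<eta>"
proof -
  have KA: "mat_bounded (schur_prod K A)" using assms(1,2) by (simp add: schur_mult_def)
  obtain \<xi> \<eta> where fin: "fin_vec \<xi>" "fin_vec \<eta>" "l2norm \<xi> \<le> 1" "l2norm \<eta> \<le> 1"
    and large: "R * mat_norm A < cmod (mat_form (schur_prod K A) \<xi> \<eta>)"
    using assms(3) less_cSup_iff[OF _ bdd_above_unit_form_values[OF KA]] zero_in_unit_form_values
    unfolding mat_norm_eq_Sup unit_form_values_def by blast
  have pos: "0 < mat_norm A"
  proof (rule ccontr)
    assume "\<not> 0 < mat_norm A"
    then have "A s t = 0" for s t
      using norm_entry_le_mat_norm[OF assms(2), of s t] mat_norm_nonneg[OF assms(2)] by simp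
    then show False using large \<open>\<not> 0 < mat_norm A\<close> mat_norm_nonneg[OF assms(2)] by (simp add: mat_form_def)
  qed
  define c where "c = complex_of_real (inverse (mat_norm A))"
  have c: "cmod c = inverse (mat_norm A)" using pos unfolding c_def norm_of_real by simp
  define P where "P = (\<lambda>s t. if s \<in> supp \<eta> \<and> t \<in> supp \<xi> then c * A s t else 0)"
  have P: "mat_bounded P" "mat_norm P \<le> 1"
    using mat_norm_cutoff_le[OF assms(2), of "supp \<eta>" "supp \<xi>" c] pos by (simp_all add: P_def c)
  have "mat_form (schur_prod K P) \<xi> \<eta> = c * mat_form (schur_prod K A) \<xi> \<eta>"
    unfolding mat_form_def sum_distrib_left by (intro sum.cong refl) (simp add: P_def mult_ac)
  then have "R < cmod (mat_form (schur_prod K P) \<xi> \<eta>)"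
    using large pos by (simp add: c norm_mult pos_less_divide_eq field_simps)
  moreover have "\<forall>s t. P s t \<noteq> 0 \<longrightarrow> s \<in> supp \<eta> \<and> t \<in> supp \<xi>" by (simp add: P_def)
  ultimately show ?thesis using P fin unfolding schur_witness_def by blast
qed

lemma schur_witnesses_if_unbounded:
  assumes "schur_mult K" "\<nexists>C. schur_bound K C"
  shows "\<exists>P \<xi> \<eta>. \<forall>m::nat. schur_witness K (real m) (P m) (\<xi> m) (\<eta> m)"
proof -
  have "\<exists>A. mat_bounded A \<and> real m * mat_norm A < mat_norm (schur_prod K A)" for m
    using assms(2) unfolding schur_bound_def by (meson not_le of_nat_0_le_iff)
  then have "\<forall>m::nat. \<exists>P \<xi> \<eta>. schur_witness K (real m) P \<xi> \<eta>"
    using schur_witness_exists[OF assms(1)] by blast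
  then show ?thesis by metis
qed

lemma exists_disjoint_translates:
  fixes E :: "nat \<Rightarrow> 'g::group_add set"
  assumes inf: "infinite (UNIV :: 'g set)" and fin: "\<And>m. finite (E m)"
  shows "\<exists>g. disjoint_family (\<lambda>m. (\<lambda>x. x + g m) ` E m)"
proof -
  have avoid: "\<exists>g. (\<lambda>x. x + g) ` E m \<inter> U = {}" if "finite U" for m U
  proof -
    have "finite (\<Union>x\<in>E m. (\<lambda>u. - x + u) ` U)" using fin that by simp
    then obtain g where g: "g \<notin> (\<Union>x\<in>E m. (\<lambda>u. - x + u) ` U)"
      using ex_new_if_finite[OF inf] by blast
    have "x + g \<notin> U" if "x \<in> E m" for x
    proof
      assume "x + g \<in> U"
      then have "g \<in> (\<lambda>u. - x + u) ` U" by (rule rev_image_eqI) (simp add: add.assoc[symmetric])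
      then show False using g that by blast
    qed
    then show ?thesis by blast
  qed
  \<comment> \<open>choose the translates one after another, each avoiding all previously used points\<close>
  define pick where "pick m U = (SOME g. (\<lambda>x. x + g) ` E m \<inter> U = {})" for m U
  define U where "U = rec_nat {} (\<lambda>m U. U \<union> (\<lambda>x. x + pick m U) ` E m)"
  have U_0: "U 0 = {}" and U_Suc: "U (Suc m) = U m \<union> (\<lambda>x. x + pick m (U m)) ` E m" for m
    by (simp_all add: U_def)
  have finU: "finite (U m)" for m by (induction m) (simp_all add: U_0 U_Suc fin)
  define g where "g m = pick m (U m)" for m
  have fresh: "(\<lambda>x. x + g m) ` E m \<inter> U m = {}" for m
    unfolding g_def pick_def by (rule someI_ex[OF avoid[OF finU]])
  have used: "(\<lambda>x. x + g l) ` E l \<subseteq> U m" if "l < m" for l m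
    using that by (induction m) (auto simp: U_Suc g_def less_Suc_eq)
  have "(\<lambda>x. x + g l) ` E l \<inter> (\<lambda>x. x + g m) ` E m = {}" if "l \<noteq> m" for l m
  proof (cases "l < m")
    case True then show ?thesis using used[OF True] fresh[of m] by blast
  next
    case False then have "m < l" using that by simp
    then show ?thesis using used[of m l] fresh[of l] by blast
  qed
  then show ?thesis unfolding disjoint_family_on_def by blast
qed

lemma toeplitz_translate: "toeplitz \<phi> (s + g) (t + g) = toeplitz \<phi> s (t :: 'g::group_add)"
proof -
  have "(s + g) + - (t + g) = s + - t" by (metis add.assoc add_minus_cancel minus_add)
  then show ?thesis by (rule arg_cong)
qed

lemma mat_norm_glue_le:
  assumes R: "0 \<le> R" and disj: "disjoint_family W"
    and Q_supp: "\<And>m s t. Q m s t \<noteq> 0 \<Longrightarrow> s \<in> W m \<and> t \<in> W m"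
    and Q: "\<And>m. mat_bounded (Q m)" "\<And>m. mat_norm (Q m) \<le> R"
  shows "mat_bounded (\<lambda>s t. Q (SOME m. s \<in> W m) s t)" "mat_norm (\<lambda>s t. Q (SOME m. s \<in> W m) s t) \<le> R"
proof -
  let ?A = "\<lambda>s t. Q (SOME m. s \<in> W m) s t"
  have blocks: "\<exists>m. s \<in> W m \<and> t \<in> W m" if "?A s t \<noteq> 0" for s t
    using Q_supp that by blast
  have bound: "cmod (mat_form ?A x y) \<le> R * l2norm x * l2norm y"
    if "fin_vec x" "fin_vec y" "supp x \<subseteq> W m" "supp y \<subseteq> W m" for m x y
  proof -
    have "mat_form ?A x y = mat_form (Q m) x y"
      unfolding mat_form_def using that(4) some_mem_disjoint_family[OF disj]
      by (intro sum.cong refl) auto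
    also have "cmod \<dots> \<le> mat_norm (Q m) * l2norm x * l2norm y"
      by (rule norm_mat_form_le[OF Q(1) that(1,2)])
    also have "\<dots> \<le> R * l2norm x * l2norm y"
      by (intro mult_right_mono Q(2) l2norm_nonneg)
    finally show ?thesis .
  qed
  show "mat_bounded ?A" by (rule mat_norm_le_block_diagonal(1)[OF R disj blocks bound])
  show "mat_norm ?A \<le> R" by (rule mat_norm_le_block_diagonal(2)[OF R disj blocks bound])
qed

lemma exists_sum_of_translates:
  fixes P :: "nat \<Rightarrow> 'g::group_add \<Rightarrow> 'g \<Rightarrow> complex"
  assumes disj: "disjoint_family (\<lambda>m. (\<lambda>x. x + g m) ` E m)"
    and P_supp: "\<And>m s t. P m s t \<noteq> 0 \<Longrightarrow> s \<in> E m \<and> t \<in> E m"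
    and P: "\<And>m. mat_bounded (P m)" "\<And>m. mat_norm (P m) \<le> 1"
  shows "\<exists>A. mat_bounded A \<and> (\<forall>m s t. s - g m \<in> E m \<longrightarrow> A s t = P m (s - g m) (t - g m))"
proof -
  define W where "W = (\<lambda>m. (\<lambda>x. x + g m) ` E m)"
  define Q where "Q m s t = P m (s + - g m) (t + - g m)" for m s t
  have disjW: "disjoint_family W" using disj by (simp add: W_def)
  have W_iff: "s \<in> W m \<longleftrightarrow> s - g m \<in> E m" for s m
  proof
    assume "s \<in> W m"
    then obtain x where "x \<in> E m" "s = x + g m" by (auto simp: W_def)
    then show "s - g m \<in> E m" by simp
  next
    assume "s - g m \<in> E m"
    moreover have "s = s - g m + g m" by simp
    ultimately show "s \<in> W m" unfolding W_def by (rule rev_image_eqI)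
  qed
  have Q_supp: "s \<in> W m \<and> t \<in> W m" if "Q m s t \<noteq> 0" for m s t
    using P_supp[OF that[unfolded Q_def]] by (simp add: W_iff)
  have "cmod (mat_form (Q m) x y) \<le> 1 * l2norm x * l2norm y" if "fin_vec x" "fin_vec y" for m x y
  proof -
    have "mat_form (Q m) x y = mat_form (P m) (\<lambda>s. x (s + g m)) (\<lambda>s. y (s + g m))"
      unfolding Q_def by (rule mat_form_translate)
    also have "cmod \<dots> \<le> mat_norm (P m) * l2norm x * l2norm y"
      using norm_mat_form_le[OF P(1) fin_vec_translate fin_vec_translate, OF that]
      by (simp add: l2norm_translate)
    also have "\<dots> \<le> 1 * l2norm x * l2norm y"
      by (intro mult_right_mono P(2) l2norm_nonneg)
    finally show ?thesis .
  qed
  then have QB: "mat_bounded (Q m)" "mat_norm (Q m) \<le> 1" for m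
    using mat_bounded_normI[of 1 "Q m"] by auto
  have "mat_bounded (\<lambda>s t. Q (SOME m. s \<in> W m) s t)"
    by (rule mat_norm_glue_le(1)[OF zero_le_one disjW Q_supp QB])
  moreover have "Q (SOME m. s \<in> W m) s t = P m (s - g m) (t - g m)" if "s - g m \<in> E m" for m s t
    using some_mem_disjoint_family[OF disjW] that by (simp add: W_iff Q_def)
  ultimately show ?thesis by blast
qed

lemma schur_bound_toeplitz_infinite:
  fixes \<phi> :: "'g::group_add \<Rightarrow> complex"
  assumes inf: "infinite (UNIV :: 'g set)" and sm: "schur_mult (toeplitz \<phi>)"
  shows "\<exists>C. schur_bound (toeplitz \<phi>) C"
proof (rule ccontr)
  assume "\<nexists>C. schur_bound (toeplitz \<phi>) C"
  then obtain P \<xi> \<eta> where "\<And>m. schur_witness (toeplitz \<phi>) (real m) (P m) (\<xi> m) (\<eta> m)"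
    using schur_witnesses_if_unbounded[OF sm] by blast
  then have P: "\<And>m. mat_bounded (P m)" "\<And>m. mat_norm (P m) \<le> 1"
    and P_supp: "\<And>m s t. P m s t \<noteq> 0 \<Longrightarrow> s \<in> supp (\<eta> m) \<and> t \<in> supp (\<xi> m)"
    and fin: "\<And>m. fin_vec (\<xi> m)" "\<And>m. fin_vec (\<eta> m)"
    and unit: "\<And>m. l2norm (\<xi> m) \<le> 1" "\<And>m. l2norm (\<eta> m) \<le> 1"
    and large: "\<And>m. real m < cmod (mat_form (schur_prod (toeplitz \<phi>) (P m)) (\<xi> m) (\<eta> m))"
    unfolding schur_witness_def by blast+
  define E where "E m = supp (\<xi> m) \<union> supp (\<eta> m)" for m
  have "finite (E m)" for m using fin by (simp add: E_def fin_vec_def)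
  then obtain g where "disjoint_family (\<lambda>m. (\<lambda>x. x + g m) ` E m)"
    using exists_disjoint_translates[OF inf] by blast
  moreover have "s \<in> E m \<and> t \<in> E m" if "P m s t \<noteq> 0" for m s t
    using P_supp[OF that] by (simp add: E_def)
  \<comment> \<open>A is a contraction containing a translate of every witness, so the Schur product with it
    would have to exceed every m\<close>
  ultimately obtain A where A: "mat_bounded A"
    and A_eq: "\<And>m s t. s - g m \<in> E m \<Longrightarrow> A s t = P m (s - g m) (t - g m)"
    using exists_sum_of_translates[of g E P] P by blast
  have bounded: "mat_bounded (schur_prod (toeplitz \<phi>) A)"
    using sm A by (simp add: schur_mult_def)
  obtain m where m: "mat_norm (schur_prod (toeplitz \<phi>) A) < real m"
    using reals_Archimedean2 by blast
  define x y where "x = (\<lambda>s. \<xi> m (s + - g m))" and "y = (\<lambda>s. \<eta> m (s + - g m))"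
  have xy: "fin_vec x" "fin_vec y" "l2norm x \<le> 1" "l2norm y \<le> 1"
    unfolding x_def y_def l2norm_translate by (intro fin_vec_translate fin unit)+
  have "mat_form (schur_prod (toeplitz \<phi>) A) x y =
      mat_form (\<lambda>s t. schur_prod (toeplitz \<phi>) (P m) (s + - g m) (t + - g m)) x y"
    unfolding mat_form_def toeplitz_translate
    by (intro sum.cong refl) (auto simp: A_eq y_def supp_def E_def)
  also have "\<dots> = mat_form (schur_prod (toeplitz \<phi>) (P m)) (\<xi> m) (\<eta> m)"
    unfolding mat_form_translate[of "schur_prod (toeplitz \<phi>) (P m)" "g m"]
    unfolding x_def y_def by (simp add: add.assoc)
  finally have "real m < cmod (mat_form (schur_prod (toeplitz \<phi>) A) x y)" using large by simp
  also have "\<dots> \<le> mat_norm (schur_prod (toeplitz \<phi>) A) * l2norm x * l2norm y"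
    by (rule norm_mat_form_le[OF bounded xy(1,2)])
  also have "\<dots> \<le> mat_norm (schur_prod (toeplitz \<phi>) A) * 1 * 1"
    using xy mat_norm_nonneg[OF bounded] by (intro mult_mono) (auto simp: l2norm_nonneg)
  finally show False using m by simp
qed

lemma schur_bound_toeplitz:
  fixes \<phi> :: "'g::group_add \<Rightarrow> complex"
  assumes "schur_mult (toeplitz \<phi>)"
  shows "\<exists>C. schur_bound (toeplitz \<phi>) C"
proof (cases "finite (UNIV :: 'g set)")
  case True
  then show ?thesis by (rule schur_bound_finite)
next
  case False
  then show ?thesis by (rule schur_bound_toeplitz_infinite[OF _ assms])
qed



section \<open>Matrices of twisted group algebra elements\<close>

lemma inj_on_minus_right: "inj_on (\<lambda>k. h + - k) (T :: 'g::group_add set)"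
  unfolding inj_on_def by (metis add_left_cancel neg_equal_iff_equal)

lemma inj_on_add_minus: "inj_on (\<lambda>h. h + - k) (T :: 'g::group_add set)"
  by (auto simp: inj_on_def)

lemma cocycle2_norm: "cocycle2 \<sigma> \<Longrightarrow> cmod (\<sigma> g h) = 1"
  by (simp add: cocycle2_def)

lemma tw_mat_bounded:
  assumes "cocycle2 \<sigma>" "fin_vec c"
  shows "mat_bounded (tw_mat \<sigma> c)"
proof (rule mat_bounded_schur_test)
  fix s and T :: "'a set" assume "finite T"
  then show "(\<Sum>t\<in>T. cmod (tw_mat \<sigma> c s t)) \<le> (\<Sum>g\<in>supp c. cmod (c g))"
    using sum_norm_inj_le_sum_supp[OF _ inj_on_minus_right assms(2)]
    by (simp add: tw_mat_def norm_mult cocycle2_norm[OF assms(1)])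
next
  fix t and S :: "'a set" assume "finite S"
  then show "(\<Sum>s\<in>S. cmod (tw_mat \<sigma> c s t)) \<le> (\<Sum>g\<in>supp c. cmod (c g))"
    using sum_norm_inj_le_sum_supp[OF _ inj_on_add_minus assms(2)]
    by (simp add: tw_mat_def norm_mult cocycle2_norm[OF assms(1)])
qed

lemma norm_block_mat:
  assumes "cocycle2 \<sigma>"
  shows "cmod (block_mat \<sigma> n C (i, h) (j, k)) = (if i < n \<and> j < n then cmod (C i j (h + - k)) else 0)"
  by (simp add: block_mat_def tw_mat_def norm_mult cocycle2_norm[OF assms])

lemma block_mat_bounded:
  fixes \<sigma> :: "'g::group_add \<Rightarrow> 'g \<Rightarrow> complex"
  assumes "cocycle2 \<sigma>" "\<And>i j. fin_vec (C i j)"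
  shows "mat_bounded (block_mat \<sigma> n C)"
proof -
  define l1 where "l1 i j = (\<Sum>g\<in>supp (C i j). cmod (C i j g))" for i j
  define R where "R = (\<Sum>i<n. \<Sum>j<n. l1 i j)"
  have l1_nonneg: "0 \<le> l1 i j" for i j by (simp add: l1_def sum_nonneg)
  show ?thesis
  proof (rule mat_bounded_schur_test[where R = R])
    fix p :: "nat \<times> 'g" and T :: "(nat \<times> 'g) set" assume T: "finite T"
    obtain i h where p: "p = (i, h)" by fastforce
    have "(\<Sum>q\<in>T. cmod (block_mat \<sigma> n C p q)) \<le> (\<Sum>j<n. \<Sum>k\<in>snd ` T. cmod (block_mat \<sigma> n C p (j, k)))"
      by (rule sum_le_sum_lessThan_times) (use T in \<open>auto simp: p block_mat_def split: if_splits\<close>)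
    also have "\<dots> \<le> R"
    proof (cases "i < n")
      case True
      have "(\<Sum>j<n. \<Sum>k\<in>snd ` T. cmod (block_mat \<sigma> n C p (j, k))) \<le> (\<Sum>j<n. l1 i j)"
        using sum_norm_inj_le_sum_supp[OF finite_imageI[OF T] inj_on_minus_right assms(2)]
        by (intro sum_mono) (simp add: p True norm_block_mat[OF assms(1)] l1_def)
      also have "\<dots> \<le> R"
        unfolding R_def using True by (intro member_le_sum) (auto intro: sum_nonneg l1_nonneg)
      finally show ?thesis .
    qed (simp add: p norm_block_mat[OF assms(1)] R_def sum_nonneg l1_nonneg)
    finally show "(\<Sum>q\<in>T. cmod (block_mat \<sigma> n C p q)) \<le> R" .
  next
    fix q :: "nat \<times> 'g" and S :: "(nat \<times> 'g) set" assume S: "finite S"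
    obtain j k where q: "q = (j, k)" by fastforce
    have "(\<Sum>p\<in>S. cmod (block_mat \<sigma> n C p q)) \<le> (\<Sum>i<n. \<Sum>h\<in>snd ` S. cmod (block_mat \<sigma> n C (i, h) q))"
      by (rule sum_le_sum_lessThan_times) (use S in \<open>auto simp: q block_mat_def split: if_splits\<close>)
    also have "\<dots> \<le> R"
    proof (cases "j < n")
      case True
      have "(\<Sum>i<n. \<Sum>h\<in>snd ` S. cmod (block_mat \<sigma> n C (i, h) q)) \<le> (\<Sum>i<n. l1 i j)"
        using sum_norm_inj_le_sum_supp[OF finite_imageI[OF S] inj_on_add_minus assms(2)]
        by (intro sum_mono) (simp add: q True norm_block_mat[OF assms(1)] l1_def)
      also have "\<dots> \<le> (\<Sum>i<n. \<Sum>j<n. l1 i j)"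
        using True by (intro sum_mono member_le_sum) (auto intro: l1_nonneg)
      finally show ?thesis by (simp add: R_def)
    qed (simp add: q norm_block_mat[OF assms(1)] R_def sum_nonneg l1_nonneg)
    finally show "(\<Sum>p\<in>S. cmod (block_mat \<sigma> n C p q)) \<le> R" .
  qed
qed

lemma cocycle2_twist:
  assumes "cocycle2 \<sigma>"
  shows "cnj (\<sigma> (a - b) b) * \<sigma> (a - b) (b + v) = \<sigma> a v * cnj (\<sigma> b v)"
proof -
  have inv: "cnj (\<sigma> g h) = inverse (\<sigma> g h)" for g h
    using cocycle2_norm[OF assms, of g h] by (simp add: divide_conv_cnj inverse_eq_divide)
  have nz: "\<sigma> g h \<noteq> 0" for g h
    using cocycle2_norm[OF assms, of g h] by auto
  have "\<sigma> (a - b) b * \<sigma> a v = \<sigma> b v * \<sigma> (a - b) (b + v)"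
    using assms unfolding cocycle2_def by (metis diff_add_cancel)
  then have "\<sigma> (a - b) (b + v) = \<sigma> (a - b) b * \<sigma> a v / \<sigma> b v"
    using nz by (simp add: field_simps)
  then show ?thesis using nz by (simp add: inv field_simps)
qed

text \<open>tw_blocks \<sigma> A f is the n \<times> n matrix over C(G,\<sigma>) whose (i, j) entry is A (f i) (f j)
  times the twisted translation by f i - f j, corrected by a cocycle factor. Its matrix on
  l2({0..<n} \<times> G) is block diagonal along the sets diag_set f n v, and on each block it is A
  on f ` {..<n}, conjugated by the diagonal unitary t \<mapsto> \<sigma> t v (see cocycle2_twist).\<close>

definition diag_set :: "(nat \<Rightarrow> 'g::group_add) \<Rightarrow> nat \<Rightarrow> 'g \<Rightarrow> (nat \<times> 'g) set" where
  "diag_set f n v = (\<lambda>i. (i, f i + v)) ` {..<n}"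

definition tw_blocks :: "('g::group_add \<Rightarrow> 'g \<Rightarrow> complex) \<Rightarrow> ('g \<Rightarrow> 'g \<Rightarrow> complex) \<Rightarrow> (nat \<Rightarrow> 'g)
    \<Rightarrow> nat \<Rightarrow> nat \<Rightarrow> 'g \<Rightarrow> complex" where
  "tw_blocks \<sigma> A f i j g =
    (if g = f i + - f j then A (f i) (f j) * cnj (\<sigma> (f i + - f j) (f j)) else 0)"

definition diag_slice :: "('g::group_add \<Rightarrow> 'g \<Rightarrow> complex) \<Rightarrow> (nat \<Rightarrow> 'g) \<Rightarrow> nat \<Rightarrow> 'g
    \<Rightarrow> (nat \<times> 'g \<Rightarrow> complex) \<Rightarrow> 'g \<Rightarrow> complex" where
  "diag_slice \<sigma> f n v X t =
    (if t \<in> f ` {..<n} then X (inv_into {..<n} f t, t + v) * cnj (\<sigma> t v) else 0)"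

definition graph_vec :: "(nat \<Rightarrow> 'g) \<Rightarrow> nat \<Rightarrow> ('g \<Rightarrow> complex) \<Rightarrow> nat \<times> 'g \<Rightarrow> complex" where
  "graph_vec f n \<xi> = (\<lambda>(j, k). if j < n \<and> k = f j then \<xi> k else 0)"

lemma disjoint_family_diag_set: "disjoint_family (diag_set f n)"
  by (auto simp: disjoint_family_on_def diag_set_def)

lemma fin_vec_tw_blocks: "fin_vec (tw_blocks \<sigma> A f i j)"
  by (rule fin_vec_if_supp_subset[of "{f i + - f j}"]) (auto simp: supp_def tw_blocks_def)

lemma tw_blocks_schur_prod:
  "(\<lambda>i j g. \<phi> g * tw_blocks \<sigma> A f i j g) = tw_blocks \<sigma> (schur_prod (toeplitz \<phi>) A) f"
  by (auto simp: fun_eq_iff tw_blocks_def)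

lemma block_mat_tw_blocks_nonzero:
  assumes "block_mat \<sigma> n (tw_blocks \<sigma> A f) p q \<noteq> 0"
  shows "\<exists>v. p \<in> diag_set f n v \<and> q \<in> diag_set f n v"
proof -
  obtain i h j k where pq: "p = (i, h)" "q = (j, k)" by fastforce
  have ij: "i < n" "j < n" and hk: "h + - k = f i + - f j"
    using assms by (auto simp: pq block_mat_def tw_mat_def tw_blocks_def split: if_splits)
  have "h = f i + (- f j + k)"
    using hk by (metis add.assoc add.left_inverse add_0_right)
  then have v: "- f i + h = - f j + k"
    by (simp add: add.assoc)
  have "h = f i + (- f i + h)" by simp
  moreover have "k = f j + (- f i + h)" by (simp add: v)
  ultimately show ?thesis using ij unfolding pq diag_set_def by blast
qed

lemma block_mat_tw_blocks_diag:
  assumes "cocycle2 \<sigma>" "i < n" "j < n"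
  shows "block_mat \<sigma> n (tw_blocks \<sigma> A f) (i, f i + v) (j, f j + v) =
    \<sigma> (f i) v * A (f i) (f j) * cnj (\<sigma> (f j) v)"
proof -
  have "(f i + v) + - (f j + v) = f i + - f j"
    by (metis add.assoc add_minus_cancel minus_add)
  then have "block_mat \<sigma> n (tw_blocks \<sigma> A f) (i, f i + v) (j, f j + v) =
      A (f i) (f j) * (cnj (\<sigma> (f i + - f j) (f j)) * \<sigma> (f i + - f j) (f j + v))"
    using assms(2,3) by (simp add: block_mat_def tw_mat_def tw_blocks_def)
  then show ?thesis by (simp add: cocycle2_twist[OF assms(1)])
qed

lemma diag_slice_apply:
  assumes "inj_on f {..<n}" "i < n"
  shows "diag_slice \<sigma> f n v X (f i) = X (i, f i + v) * cnj (\<sigma> (f i) v)"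
  using assms by (simp add: diag_slice_def)

lemma supp_diag_slice: "supp (diag_slice \<sigma> f n v X) \<subseteq> f ` {..<n}"
  by (auto simp: supp_def diag_slice_def split: if_splits)

lemma l2norm_diag_slice:
  assumes "cocycle2 \<sigma>" "inj_on f {..<n}" "supp X \<subseteq> diag_set f n v"
  shows "l2norm (diag_slice \<sigma> f n v X) = l2norm X"
proof -
  have "sqnorm (diag_slice \<sigma> f n v X) = (\<Sum>t\<in>f ` {..<n}. (cmod (diag_slice \<sigma> f n v X t))\<^sup>2)"
    by (rule sqnorm_eq_sum_superset[OF _ supp_diag_slice]) simp
  also have "\<dots> = (\<Sum>i<n. (cmod (X (i, f i + v)))\<^sup>2)"
    using assms(2) by (simp add: sum.reindex diag_slice_apply norm_mult cocycle2_norm[OF assms(1)])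
  also have "\<dots> = (\<Sum>p\<in>diag_set f n v. (cmod (X p))\<^sup>2)"
    unfolding diag_set_def by (subst sum.reindex) (auto simp: inj_on_def)
  also have "\<dots> = sqnorm X"
    by (rule sqnorm_eq_sum_superset[symmetric]) (use assms(3) in \<open>simp_all add: diag_set_def\<close>)
  finally show ?thesis by (simp add: l2norm_eq_sqrt_sqnorm)
qed

lemma mat_form_block_tw_blocks:
  assumes "cocycle2 \<sigma>" "inj_on f {..<n}" "supp X \<subseteq> diag_set f n v" "supp Y \<subseteq> diag_set f n v"
  shows "mat_form (block_mat \<sigma> n (tw_blocks \<sigma> A f)) X Y =
    mat_form A (diag_slice \<sigma> f n v X) (diag_slice \<sigma> f n v Y)"
proof -
  let ?x = "diag_slice \<sigma> f n v X" and ?y = "diag_slice \<sigma> f n v Y"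
  have inj: "inj_on (\<lambda>i. (i, f i + v)) {..<n}" by (auto simp: inj_on_def)
  have "mat_form (block_mat \<sigma> n (tw_blocks \<sigma> A f)) X Y = (\<Sum>p\<in>diag_set f n v. \<Sum>q\<in>diag_set f n v.
      cnj (Y p) * block_mat \<sigma> n (tw_blocks \<sigma> A f) p q * X q)"
    by (rule mat_form_eq_sum_superset) (use assms in \<open>simp_all add: diag_set_def\<close>)
  also have "\<dots> = (\<Sum>i<n. \<Sum>j<n. cnj (?y (f i)) * A (f i) (f j) * ?x (f j))"
    unfolding diag_set_def sum.reindex[OF inj]
    by (intro sum.cong refl)
      (simp add: block_mat_tw_blocks_diag[OF assms(1)] diag_slice_apply[OF assms(2)] mult_ac)
  also have "\<dots> = (\<Sum>s\<in>f ` {..<n}. \<Sum>t\<in>f ` {..<n}. cnj (?y s) * A s t * ?x t)"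
    using assms(2) by (simp add: sum.reindex)
  also have "\<dots> = mat_form A ?x ?y"
    by (rule mat_form_eq_sum_superset[symmetric]) (simp_all add: supp_diag_slice)
  finally show ?thesis .
qed

lemma mat_norm_block_tw_blocks_le:
  assumes "cocycle2 \<sigma>" "inj_on f {..<n}" "mat_bounded A"
  shows "mat_norm (block_mat \<sigma> n (tw_blocks \<sigma> A f)) \<le> mat_norm A"
proof (rule mat_norm_le_block_diagonal(2)[OF mat_norm_nonneg[OF assms(3)] disjoint_family_diag_set])
  show "\<exists>v. p \<in> diag_set f n v \<and> q \<in> diag_set f n v"
    if "block_mat \<sigma> n (tw_blocks \<sigma> A f) p q \<noteq> 0" for p q
    using that by (rule block_mat_tw_blocks_nonzero)
  fix v X Y assume XY: "fin_vec X" "fin_vec Y" "supp X \<subseteq> diag_set f n v" "supp Y \<subseteq> diag_set f n v"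
  have "fin_vec (diag_slice \<sigma> f n v X)" "fin_vec (diag_slice \<sigma> f n v Y)"
    by (rule fin_vec_if_supp_subset[OF _ supp_diag_slice], simp)+
  then have "cmod (mat_form A (diag_slice \<sigma> f n v X) (diag_slice \<sigma> f n v Y))
      \<le> mat_norm A * l2norm (diag_slice \<sigma> f n v X) * l2norm (diag_slice \<sigma> f n v Y)"
    by (rule norm_mat_form_le[OF assms(3)])
  then show "cmod (mat_form (block_mat \<sigma> n (tw_blocks \<sigma> A f)) X Y) \<le> mat_norm A * l2norm X * l2norm Y"
    by (simp add: mat_form_block_tw_blocks[OF assms(1,2) XY(3,4)] l2norm_diag_slice[OF assms(1,2)] XY)
qed

lemma supp_graph_vec: "supp (graph_vec f n \<xi>) \<subseteq> diag_set f n 0"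
  by (auto simp: supp_def graph_vec_def diag_set_def split: if_splits)

lemma diag_slice_graph_vec:
  assumes "cocycle2 \<sigma>" "inj_on f {..<n}" "supp \<xi> \<subseteq> f ` {..<n}"
  shows "diag_slice \<sigma> f n 0 (graph_vec f n \<xi>) = \<xi>"
proof
  fix t
  show "diag_slice \<sigma> f n 0 (graph_vec f n \<xi>) t = \<xi> t"
  proof (cases "t \<in> f ` {..<n}")
    case True
    then obtain i where "i < n" "t = f i" by blast
    then show ?thesis
      using assms by (simp add: diag_slice_apply graph_vec_def cocycle2_def)
  qed (use assms(3) in \<open>auto simp: diag_slice_def supp_def\<close>)
qed

lemma l2norm_graph_vec:
  fixes f :: "nat \<Rightarrow> 'g::group_add"
  assumes "inj_on f {..<n}" "supp \<xi> \<subseteq> f ` {..<n}"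
  shows "fin_vec (graph_vec f n \<xi>)" "l2norm (graph_vec f n \<xi>) = l2norm \<xi>"
proof -
  show "fin_vec (graph_vec f n \<xi>)"
    by (rule fin_vec_if_supp_subset[OF _ supp_graph_vec]) (simp add: diag_set_def)
  have "sqnorm (graph_vec f n \<xi>) = (\<Sum>p\<in>diag_set f n 0. (cmod (graph_vec f n \<xi> p))\<^sup>2)"
    by (rule sqnorm_eq_sum_superset[OF _ supp_graph_vec]) (simp add: diag_set_def)
  also have "\<dots> = (\<Sum>i<n. (cmod (\<xi> (f i)))\<^sup>2)"
    unfolding diag_set_def by (subst sum.reindex) (auto simp: inj_on_def graph_vec_def)
  also have "\<dots> = (\<Sum>t\<in>f ` {..<n}. (cmod (\<xi> t))\<^sup>2)"
    using assms(1) by (simp add: sum.reindex)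
  also have "\<dots> = sqnorm \<xi>"
    by (rule sqnorm_eq_sum_superset[symmetric]) (simp_all add: assms(2))
  finally show "l2norm (graph_vec f n \<xi>) = l2norm \<xi>" by (simp add: l2norm_eq_sqrt_sqnorm)
qed

lemma mat_form_block_tw_blocks_graph_vec:
  assumes "cocycle2 \<sigma>" "inj_on f {..<n}" "supp \<xi> \<subseteq> f ` {..<n}" "supp \<eta> \<subseteq> f ` {..<n}"
  shows "mat_form (block_mat \<sigma> n (tw_blocks \<sigma> A f)) (graph_vec f n \<xi>) (graph_vec f n \<eta>) =
    mat_form A \<xi> \<eta>"
  by (simp add: mat_form_block_tw_blocks[OF assms(1,2) supp_graph_vec supp_graph_vec]
      diag_slice_graph_vec[OF assms(1,2,3)] diag_slice_graph_vec[OF assms(1,2,4)])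

lemma schur_bound_if_cb_bound:
  fixes \<sigma> :: "'g::group_add \<Rightarrow> 'g \<Rightarrow> complex"
  assumes "cocycle2 \<sigma>" and cb: "cb_bound \<sigma> \<phi> C" and A: "mat_bounded A"
  shows "mat_bounded (schur_prod (toeplitz \<phi>) A)" "mat_norm (schur_prod (toeplitz \<phi>) A) \<le> C * mat_norm A"
proof -
  have C: "0 \<le> C" using cb by (simp add: cb_bound_def)
  have R: "0 \<le> C * mat_norm A" using C mat_norm_nonneg[OF A] by simp
  have bound: "cmod (mat_form (schur_prod (toeplitz \<phi>) A) \<xi> \<eta>) \<le> C * mat_norm A * l2norm \<xi> * l2norm \<eta>"
    if fin: "fin_vec \<xi>" "fin_vec \<eta>" for \<xi> \<eta>
  proof -
    have "finite (supp \<xi> \<union> supp \<eta>)" using fin by (simp add: fin_vec_def)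
    then obtain n and f :: "nat \<Rightarrow> 'g"
      where nf: "supp \<xi> \<union> supp \<eta> = f ` {i. i < n} \<and> inj_on f {i. i < n}"
      using finite_imp_nat_seg_image_inj_on by blast
    then have inj: "inj_on f {..<n}" and F: "supp \<xi> \<subseteq> f ` {..<n}" "supp \<eta> \<subseteq> f ` {..<n}"
      unfolding lessThan_def by auto
    define X Y where "X = graph_vec f n \<xi>" and "Y = graph_vec f n \<eta>"
    note XY = l2norm_graph_vec[OF inj F(1), folded X_def] l2norm_graph_vec[OF inj F(2), folded Y_def]
    define Mp where "Mp = block_mat \<sigma> n (tw_blocks \<sigma> (schur_prod (toeplitz \<phi>) A) f)"
    have Mp: "mat_bounded Mp"
      unfolding Mp_def by (rule block_mat_bounded[OF assms(1) fin_vec_tw_blocks])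
    have "mat_norm Mp \<le> C * mat_norm (block_mat \<sigma> n (tw_blocks \<sigma> A f))"
      using cb fin_vec_tw_blocks unfolding cb_bound_def Mp_def tw_blocks_schur_prod[symmetric] by blast
    also have "\<dots> \<le> C * mat_norm A"
      by (rule mult_left_mono[OF mat_norm_block_tw_blocks_le[OF assms(1) inj A] C])
    finally have Mp_norm: "mat_norm Mp \<le> C * mat_norm A" .
    have "mat_form (schur_prod (toeplitz \<phi>) A) \<xi> \<eta> = mat_form Mp X Y"
      unfolding Mp_def X_def Y_def by (rule mat_form_block_tw_blocks_graph_vec[OF assms(1) inj F, symmetric])
    also have "cmod \<dots> \<le> mat_norm Mp * l2norm X * l2norm Y"
      by (rule norm_mat_form_le[OF Mp XY(1,3)])
    also have "\<dots> \<le> C * mat_norm A * l2norm \<xi> * l2norm \<eta>"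
      unfolding XY(2,4) by (intro mult_right_mono Mp_norm l2norm_nonneg)
    finally show ?thesis .
  qed
  show "mat_bounded (schur_prod (toeplitz \<phi>) A)" "mat_norm (schur_prod (toeplitz \<phi>) A) \<le> C * mat_norm A"
    by (rule mat_bounded_normI[OF R bound], assumption+)+
qed

lemma block_mat_schur_prod:
  "block_mat \<sigma> n (\<lambda>i j g. \<phi> g * C i j g) = (\<lambda>p q. toeplitz \<phi> (snd p) (snd q) * block_mat \<sigma> n C p q)"
  by (auto simp: fun_eq_iff block_mat_def tw_mat_def)

lemma cb_bound_if_schur_bound:
  assumes "cocycle2 \<sigma>" "schur_mult (toeplitz \<phi>)" "schur_bound (toeplitz \<phi>) C"
  shows "cb_bound \<sigma> \<phi> C"
  unfolding cb_bound_def block_mat_schur_prod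
  using assms(3) mat_norm_ampliation_le[OF assms(2,3) block_mat_bounded[OF assms(1)]]
  by (simp add: schur_bound_def)

lemma MA_if_schur_bound:
  assumes "cocycle2 \<sigma>" "schur_bound (toeplitz \<phi>) C"
  shows "\<phi> \<in> MA \<sigma>"
proof -
  have "tw_mat \<sigma> (\<lambda>g. \<phi> g * c g) = schur_prod (toeplitz \<phi>) (tw_mat \<sigma> c)" for c
    by (simp add: fun_eq_iff tw_mat_def mult.assoc)
  then show ?thesis
    using assms(2) tw_mat_bounded[OF assms(1)] unfolding MA_def schur_bound_def by auto
qed

lemma cb_bound_iff_schur_bound:
  assumes "cocycle2 \<sigma>" "schur_mult (toeplitz \<phi>)"
  shows "cb_bound \<sigma> \<phi> C \<longleftrightarrow> schur_bound (toeplitz \<phi>) C"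
  using schur_bound_if_cb_bound(2)[OF assms(1)] cb_bound_if_schur_bound[OF assms]
  unfolding schur_bound_def cb_bound_def by blast

lemma M0A_iff_schur_mult:
  assumes "cocycle2 \<sigma>"
  shows "\<phi> \<in> M0A \<sigma> \<longleftrightarrow> schur_mult (toeplitz \<phi>)"
proof
  assume "\<phi> \<in> M0A \<sigma>"
  then obtain C where "cb_bound \<sigma> \<phi> C" by (auto simp: M0A_def)
  then show "schur_mult (toeplitz \<phi>)"
    unfolding schur_mult_def using schur_bound_if_cb_bound(1)[OF assms] by blast
next
  assume sm: "schur_mult (toeplitz \<phi>)"
  then obtain C where "schur_bound (toeplitz \<phi>) C" using schur_bound_toeplitz by blast
  then show "\<phi> \<in> M0A \<sigma>"
    using MA_if_schur_bound[OF assms] cb_bound_iff_schur_bound[OF assms sm] by (auto simp: M0A_def)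
qed

lemma cb_norm_eq_schur_norm:
  assumes "cocycle2 \<sigma>" "\<phi> \<in> M0A \<sigma>"
  shows "cb_norm \<sigma> \<phi> = schur_norm (toeplitz \<phi>)"
proof -
  have "schur_mult (toeplitz \<phi>)" using assms by (simp add: M0A_iff_schur_mult)
  then have "{C. cb_bound \<sigma> \<phi> C} = {C. schur_bound (toeplitz \<phi>) C}"
    using cb_bound_iff_schur_bound[OF assms(1)] by blast
  then show ?thesis unfolding cb_norm_def schur_norm_def schur_bound_def by simp
qed

theorem proposition4p3:
  fixes \<sigma> :: "'g::group_add \<Rightarrow> 'g \<Rightarrow> complex" and \<phi> :: "'g \<Rightarrow> complex"
  assumes "cocycle2 \<sigma>"
  shows "M0A \<sigma> = M0A (\<lambda>_ _. 1)
       \<and> (\<phi> \<in> M0A \<sigma> \<longleftrightarrow> schur_mult (\<lambda>s t. \<phi> (s + - t)))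
       \<and> (\<phi> \<in> M0A \<sigma> \<longrightarrow> cb_norm \<sigma> \<phi> = schur_norm (\<lambda>s t. \<phi> (s + - t))
                         \<and> cb_norm \<sigma> \<phi> = cb_norm (\<lambda>_ _. 1) \<phi>)"
proof -
  have trivial: "cocycle2 (\<lambda>_ _. 1 :: complex)" by (simp add: cocycle2_def)
  have same: "M0A \<sigma> = M0A (\<lambda>_ _. 1)"
    using M0A_iff_schur_mult[OF assms] M0A_iff_schur_mult[OF trivial] by blast
  have "cb_norm \<sigma> \<phi> = schur_norm (toeplitz \<phi>) \<and> cb_norm \<sigma> \<phi> = cb_norm (\<lambda>_ _. 1) \<phi>"
    if "\<phi> \<in> M0A \<sigma>"
    using cb_norm_eq_schur_norm[OF assms that] cb_norm_eq_schur_norm[OF trivial, of \<phi>] that same by simp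
  then show ?thesis using same M0A_iff_schur_mult[OF assms] by blast
qed

end
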